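(* Let $p$ be an odd prime, and let $L$ be a Lie sublattice of a saturable $\mathbb{Z}_p$-Lie lattice $S$. Then the isolator $\mathrm{iso}_S(L)$ is saturable and $|\mathrm{iso}_S(L):L|<\infty$; in particular, $L$ and $\mathrm{iso}_S(L)$ have the same dimension. Furthermore, if $L$ is a Lie ideal of $S$, then $\mathrm{iso}_S(L)$ is PF-embedded in $S$.
   Context: A $\mathbb{Z}_p$-Lie lattice is a Lie algebra over $\mathbb{Z}_p$ free of finite rank as a module (dimension = rank). The isolator of a Lie sublattice $L$ in $S$ is $\mathrm{iso}_S(L)=S\cap(\mathbb{Q}_p\otimes L)$ (inside $\mathbb{Q}_p\otimes S$). For an ideal $M$ of $S$, a potent filtration of $M$ in $S$ is a descending series $(M_i)_{i\in\mathbb{N}}$ of ideals of $S$ with $M_1=M$, $\bigcap M_i=0$, $[M_i,S]\subseteq M_{i+1}$, $[M_i,S,\ldots,S]\subseteq pM_{i+1}$ ($p-1$ copies of $S$, brackets left-normed); $M$ is PF-embedded if such exists; a Lie lattice is saturable iff it admits a potent filtration of itself. *)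

theory Defs
  imports "HOL-Computational_Algebra.Primes"
begin

text \<open>A p-adic integer is represented by its compatible sequence of residues
  x n in {0..<p^n} with x (n+1) mod p^n = x n (inverse limit of Z/p^n Z).\<close>

type_synonym zp = "nat \<Rightarrow> int"

definition Zp :: "int \<Rightarrow> zp set" where
  "Zp p = {x. \<forall>n. 0 \<le> x n \<and> x n < p ^ n \<and> x (Suc n) mod p ^ n = x n}"

definition zadd :: "int \<Rightarrow> zp \<Rightarrow> zp \<Rightarrow> zp" where
  "zadd p x y = (\<lambda>n. (x n + y n) mod p ^ n)"

definition zmul :: "int \<Rightarrow> zp \<Rightarrow> zp \<Rightarrow> zp" where
  "zmul p x y = (\<lambda>n. (x n * y n) mod p ^ n)"

definition zof_int :: "int \<Rightarrow> int \<Rightarrow> zp" where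
  "zof_int p k = (\<lambda>n. k mod p ^ n)"

type_synonym zvec = "nat \<Rightarrow> zp"

definition Zpvec :: "int \<Rightarrow> nat \<Rightarrow> zvec set" where
  "Zpvec p d = {v. (\<forall>i<d. v i \<in> Zp p) \<and> (\<forall>i\<ge>d. v i = (\<lambda>n. 0))}"

definition vzero :: zvec where
  "vzero = (\<lambda>i n. 0)"

definition vadd :: "int \<Rightarrow> zvec \<Rightarrow> zvec \<Rightarrow> zvec" where
  "vadd p v w = (\<lambda>i. zadd p (v i) (w i))"

definition vsmul :: "int \<Rightarrow> zp \<Rightarrow> zvec \<Rightarrow> zvec" where
  "vsmul p c v = (\<lambda>i. zmul p c (v i))"

definition lie_lattice :: "int \<Rightarrow> nat \<Rightarrow> (zvec \<Rightarrow> zvec \<Rightarrow> zvec) \<Rightarrow> bool" where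
  "lie_lattice p d br \<longleftrightarrow>
     (\<forall>x\<in>Zpvec p d. \<forall>y\<in>Zpvec p d. br x y \<in> Zpvec p d) \<and>
     (\<forall>x\<in>Zpvec p d. \<forall>y\<in>Zpvec p d. \<forall>z\<in>Zpvec p d.
        br (vadd p x y) z = vadd p (br x z) (br y z) \<and>
        br z (vadd p x y) = vadd p (br z x) (br z y)) \<and>
     (\<forall>c\<in>Zp p. \<forall>x\<in>Zpvec p d. \<forall>y\<in>Zpvec p d.
        br (vsmul p c x) y = vsmul p c (br x y) \<and> br x (vsmul p c y) = vsmul p c (br x y)) \<and>
     (\<forall>x\<in>Zpvec p d. br x x = vzero) \<and>
     (\<forall>x\<in>Zpvec p d. \<forall>y\<in>Zpvec p d. \<forall>z\<in>Zpvec p d.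
        vadd p (br x (br y z)) (vadd p (br y (br z x)) (br z (br x y))) = vzero)"

definition submodule :: "int \<Rightarrow> nat \<Rightarrow> zvec set \<Rightarrow> bool" where
  "submodule p d M \<longleftrightarrow> M \<subseteq> Zpvec p d \<and> vzero \<in> M \<and>
     (\<forall>x\<in>M. \<forall>y\<in>M. vadd p x y \<in> M) \<and> (\<forall>c\<in>Zp p. \<forall>x\<in>M. vsmul p c x \<in> M)"

definition lincomb :: "int \<Rightarrow> zp list \<Rightarrow> zvec list \<Rightarrow> zvec" where
  "lincomb p cs bs = foldr (vadd p) (map2 (vsmul p) cs bs) vzero"

definition is_basis :: "int \<Rightarrow> zvec set \<Rightarrow> zvec list \<Rightarrow> bool" where
  "is_basis p M bs \<longleftrightarrow> set bs \<subseteq> M \<and>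
     (\<forall>x\<in>M. \<exists>!cs. length cs = length bs \<and> set cs \<subseteq> Zp p \<and> x = lincomb p cs bs)"

definition lattice_dim :: "int \<Rightarrow> zvec set \<Rightarrow> nat" where
  "lattice_dim p M = (LEAST n. \<exists>bs. length bs = n \<and> is_basis p M bs)"

text \<open>M is a Lie sublattice of the Lie lattice (Z_p^d, br): a Z_p-submodule closed
  under the bracket which is free of finite rank (i.e. itself a Z_p-Lie lattice).\<close>

definition lie_sublattice :: "int \<Rightarrow> nat \<Rightarrow> (zvec \<Rightarrow> zvec \<Rightarrow> zvec) \<Rightarrow> zvec set \<Rightarrow> bool" where
  "lie_sublattice p d br M \<longleftrightarrow> submodule p d M \<and>
     (\<forall>x\<in>M. \<forall>y\<in>M. br x y \<in> M) \<and> (\<exists>bs. is_basis p M bs)"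

definition lie_ideal :: "int \<Rightarrow> nat \<Rightarrow> (zvec \<Rightarrow> zvec \<Rightarrow> zvec) \<Rightarrow> zvec set \<Rightarrow> zvec set \<Rightarrow> bool" where
  "lie_ideal p d br S I \<longleftrightarrow> submodule p d I \<and> I \<subseteq> S \<and> (\<forall>x\<in>I. \<forall>s\<in>S. br x s \<in> I)"

text \<open>Left-normed iterated bracket [x, s1, ..., sk] = [...[[x,s1],s2],...,sk].\<close>

definition iter_br :: "(zvec \<Rightarrow> zvec \<Rightarrow> zvec) \<Rightarrow> zvec \<Rightarrow> zvec list \<Rightarrow> zvec" where
  "iter_br br x ss = foldl br x ss"

text \<open>Potent filtration (M_i)_{i>=1} of the ideal M in S.  Since the M_i are
  submodules, the inclusions of the submodules [M_i,S] and [M_i,S,...,S] are stated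
  on generators.\<close>

definition potent_filtration ::
  "int \<Rightarrow> nat \<Rightarrow> (zvec \<Rightarrow> zvec \<Rightarrow> zvec) \<Rightarrow> zvec set \<Rightarrow> zvec set \<Rightarrow> (nat \<Rightarrow> zvec set) \<Rightarrow> bool" where
  "potent_filtration p d br S M Ms \<longleftrightarrow>
     Ms 1 = M \<and>
     (\<forall>i\<ge>1. lie_ideal p d br S (Ms i)) \<and>
     (\<forall>i\<ge>1. Ms (Suc i) \<subseteq> Ms i) \<and>
     (\<Inter>i\<in>{1..}. Ms i) = {vzero} \<and>
     (\<forall>i\<ge>1. \<forall>x\<in>Ms i. \<forall>s\<in>S. br x s \<in> Ms (Suc i)) \<and>
     (\<forall>i\<ge>1. \<forall>x\<in>Ms i. \<forall>ss. length ss = nat (p - 1) \<longrightarrow> set ss \<subseteq> S \<longrightarrow>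
        iter_br br x ss \<in> vsmul p (zof_int p p) ` Ms (Suc i))"

definition PF_embedded ::
  "int \<Rightarrow> nat \<Rightarrow> (zvec \<Rightarrow> zvec \<Rightarrow> zvec) \<Rightarrow> zvec set \<Rightarrow> zvec set \<Rightarrow> bool" where
  "PF_embedded p d br S M \<longleftrightarrow> (\<exists>Ms. potent_filtration p d br S M Ms)"

definition saturable :: "int \<Rightarrow> nat \<Rightarrow> (zvec \<Rightarrow> zvec \<Rightarrow> zvec) \<Rightarrow> zvec set \<Rightarrow> bool" where
  "saturable p d br M \<longleftrightarrow> lie_sublattice p d br M \<and> PF_embedded p d br M M"

text \<open>Isolator iso_S(L) = S \<inter> (Q_p \<otimes> L).  Inside Q_p \<otimes> S, Q_p \<otimes> L consists of
  the elements p^(-k) l with l in L, so iso_S(L) = {x in S. p^k x in L for some k}.\<close>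

definition isolator :: "int \<Rightarrow> zvec set \<Rightarrow> zvec set \<Rightarrow> zvec set" where
  "isolator p S L = {x\<in>S. \<exists>k::nat. vsmul p (zof_int p (p ^ k)) x \<in> L}"

text \<open>Index |M : L| (L \<subseteq> M additive subgroups): the set of cosets x + L, x in M.\<close>

definition cosets :: "int \<Rightarrow> zvec set \<Rightarrow> zvec set \<Rightarrow> zvec set set" where
  "cosets p M L = {vadd p x ` L | x. x \<in> M}"

end

theory Submission
  imports Defs "HOL-Number_Theory.Cong" "HOL-Library.FuncSet" "HOL-Combinatorics.Transposition"
begin

text \<open>
  Inside S = Z_p^d, the isolator of a sublattice L with basis b_0, ..., b_{m-1} is the span of the
  first m vectors of a suitable basis E of Z_p^d, and p^N kills it modulo L for some N.  Such an E
  is built by induction on m: write b_m in the current basis, divide its coordinates beyond m by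
  p^v, v their least valuation, and exchange the resulting vector, which has a unit coordinate,
  into E.  Hence iso_S(L) is free of the same rank as L and of finite index over it.  Moreover iso_S(L) is isolated (p y \<in> iso_S(L) implies
  y \<in> iso_S(L)) and inherits closure under brackets with L resp. S, so intersecting a potent
  filtration of S with iso_S(L) yields a potent filtration of iso_S(L) in itself, and in S when L
  is an ideal.
\<close>

section \<open>Arithmetic in the p-adic integers\<close>

definition zzero :: zp where "zzero = (\<lambda>n. 0)"

definition zneg :: "int \<Rightarrow> zp \<Rightarrow> zp" where "zneg p x = (\<lambda>n. (- x n) mod p ^ n)"

definition ppow :: "int \<Rightarrow> nat \<Rightarrow> zp" where "ppow p k = zof_int p (p ^ k)"

definition zdiv_ppow :: "int \<Rightarrow> nat \<Rightarrow> zp \<Rightarrow> zp" where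
  "zdiv_ppow p v x = (\<lambda>n. x (n + v) div p ^ v mod p ^ n)"

text \<open>For x \<noteq> 0 this is the p-adic valuation, the largest n with x n = 0; zval zzero is junk.\<close>

definition zval :: "zp \<Rightarrow> nat" where "zval x = (LEAST n. x (Suc n) \<noteq> 0)"

lemmas mod_arith_simps = mod_add_left_eq mod_add_right_eq mod_mult_left_eq mod_mult_right_eq
  mod_minus_eq mod_diff_left_eq mod_diff_right_eq

locale prime_Zp =
  fixes p :: int
  assumes prime_p: "prime p"
begin

lemma p_gt_1: "p > 1"
  using prime_p prime_gt_1_int by blast

lemma p_power_pos: "p ^ n > 0"
  using p_gt_1 by simp

lemma ZpD:
  assumes "x \<in> Zp p"
  shows "0 \<le> x n" "x n < p ^ n" "x (Suc n) mod p ^ n = x n"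
  using assms unfolding Zp_def by auto

lemma Zp_mod [simp]: "x \<in> Zp p \<Longrightarrow> x n mod p ^ n = x n"
  using ZpD[of x n] by simp

lemma Zp_mod_le:
  assumes "x \<in> Zp p" "k \<le> n"
  shows "x n mod p ^ k = x k"
  using assms(2)
proof (induction n)
  case 0
  then show ?case using ZpD[OF assms(1), of 0] by simp
next
  case (Suc n)
  show ?case
  proof (cases "k = Suc n")
    case False
    then have "k \<le> n" using Suc by simp
    then have "p ^ k dvd p ^ n" by (simp add: le_imp_power_dvd)
    then have "x (Suc n) mod p ^ k = (x (Suc n) mod p ^ n) mod p ^ k" by (simp add: mod_mod_cancel)
    also have "\<dots> = x n mod p ^ k" using ZpD(3)[OF assms(1)] by simp
    finally show ?thesis using Suc.IH[OF \<open>k \<le> n\<close>] by simp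
  qed (use Zp_mod[OF assms(1), of "Suc n"] in simp)
qed

lemma Zp_cong_le: "x \<in> Zp p \<Longrightarrow> k \<le> n \<Longrightarrow> [x n = x k] (mod p ^ k)"
  using Zp_mod_le[of x k n] by (simp add: cong_def)

lemma Zp_Suc_cong: "x \<in> Zp p \<Longrightarrow> [x (Suc n) = x n] (mod p ^ n)"
  using Zp_cong_le[of x n "Suc n"] by simp

lemma Zp_reduceI:
  assumes "\<And>n. [f (Suc n) = f n] (mod p ^ n)"
  shows "(\<lambda>n. f n mod p ^ n) \<in> Zp p"
proof -
  have "(f (Suc n) mod p ^ Suc n) mod p ^ n = f n mod p ^ n" for n
  proof -
    have "p ^ n dvd p ^ Suc n" by (simp add: le_imp_power_dvd)
    then have "(f (Suc n) mod p ^ Suc n) mod p ^ n = f (Suc n) mod p ^ n"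
      by (simp add: mod_mod_cancel)
    also have "\<dots> = f n mod p ^ n" using assms[of n] by (simp add: cong_def)
    finally show ?thesis .
  qed
  then show ?thesis unfolding Zp_def using p_power_pos by auto
qed

lemma Zp_eqI:
  assumes "x \<in> Zp p" "y \<in> Zp p" "\<And>n. [x n = y n] (mod p ^ n)"
  shows "x = y"
proof
  fix n
  show "x n = y n"
    using assms(3)[of n] Zp_mod[OF assms(1)] Zp_mod[OF assms(2)] by (simp add: cong_def)
qed

lemma zzero_Zp [simp]: "zzero \<in> Zp p"
  unfolding Zp_def zzero_def using p_power_pos by auto

lemma zero_fun_Zp [simp]: "(\<lambda>n. 0) \<in> Zp p"
  using zzero_Zp unfolding zzero_def .

lemma zadd_Zp [simp]: "x \<in> Zp p \<Longrightarrow> y \<in> Zp p \<Longrightarrow> zadd p x y \<in> Zp p"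
  unfolding zadd_def by (rule Zp_reduceI) (intro cong_add Zp_Suc_cong)

lemma zmul_Zp [simp]: "x \<in> Zp p \<Longrightarrow> y \<in> Zp p \<Longrightarrow> zmul p x y \<in> Zp p"
  unfolding zmul_def by (rule Zp_reduceI) (intro cong_mult Zp_Suc_cong)

lemma zneg_Zp [simp]: "x \<in> Zp p \<Longrightarrow> zneg p x \<in> Zp p"
  unfolding zneg_def by (rule Zp_reduceI) (intro cong_minus_minus_iff[THEN iffD2] Zp_Suc_cong)

lemma zof_int_Zp [simp]: "zof_int p k \<in> Zp p"
  unfolding zof_int_def by (rule Zp_reduceI) simp

lemma ppow_Zp [simp]: "ppow p k \<in> Zp p"
  unfolding ppow_def by simp

lemma zmul_commute: "zmul p a b = zmul p b a"
  by (simp add: zmul_def mult.commute)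

lemma zmul_ppow: "zmul p (ppow p a) (ppow p b) = ppow p (a + b)"
  by (simp add: ppow_def zmul_def zof_int_def fun_eq_iff mod_arith_simps power_add)

lemma zneg_ppow_nonzero: "zneg p (ppow p k) \<noteq> zzero"
proof
  assume "zneg p (ppow p k) = zzero"
  then have "zneg p (ppow p k) (Suc k) = 0" by (simp add: zzero_def)
  moreover have "p ^ k mod p ^ Suc k = p ^ k"
    using p_gt_1 p_power_pos[of k] by simp
  ultimately have "(- (p ^ k)) mod p ^ Suc k = 0"
    by (simp only: zneg_def ppow_def zof_int_def)
  then have "p ^ k * p dvd p ^ k * 1"
    by (simp add: dvd_eq_mod_eq_0[symmetric] mult.commute)
  then have "p dvd 1" using p_power_pos[of k] p_gt_1 by simp
  then show False using p_gt_1 by simp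
qed

lemma cong_inverse_unique:
  assumes "[a * y = 1] (mod m)" "[a * z = 1] (mod m)"
  shows "[y = (z::int)] (mod m)"
proof -
  have "[y * (a * z) = y * 1] (mod m)" by (rule cong_scalar_left[OF assms(2)])
  moreover have "[(a * y) * z = 1 * z] (mod m)" by (rule cong_scalar_right[OF assms(1)])
  ultimately show ?thesis by (simp add: cong_def mult.commute mult.left_commute)
qed

lemma cong_cancel_unit:
  assumes "[a * c = b * c] (mod m)" "[c * w = 1] (mod m)"
  shows "[a = (b::int)] (mod m)"
proof -
  have "[a * c * w = b * c * w] (mod m)" using assms(1) by (rule cong_scalar_right)
  moreover have "[a * (c * w) = a * 1] (mod m)" using assms(2) by (rule cong_scalar_left)
  moreover have "[b * (c * w) = b * 1] (mod m)" using assms(2) by (rule cong_scalar_left)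
  ultimately show ?thesis by (simp add: cong_def mult.assoc)
qed

lemma Zp_inverse_exists:
  assumes x: "x \<in> Zp p" and unit: "x 1 \<noteq> 0"
  shows "\<exists>w\<in>Zp p. \<forall>n. [x n * w n = 1] (mod p ^ n)"
proof -
  have "coprime (x n) (p ^ n)" for n
  proof (cases n)
    case (Suc k)
    have "x n mod p = x 1" using Zp_mod_le[OF x, of 1 n] Suc by simp
    then have "coprime p (x n)"
      using unit prime_p by (simp add: prime_imp_coprime dvd_eq_mod_eq_0)
    then show ?thesis by (simp add: coprime_commute coprime_power_right_iff)
  qed simp
  then have "\<exists>y. 0 \<le> y \<and> y < p ^ n \<and> [x n * y = 1] (mod p ^ n)" for n
    using coprime_iff_invertible'_int[OF p_power_pos] by blast
  then obtain w where w: "\<And>n. 0 \<le> w n \<and> w n < p ^ n \<and> [x n * w n = 1] (mod p ^ n)"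
    by metis
  have "w (Suc n) mod p ^ n = w n" for n
  proof -
    have "p ^ n dvd p ^ Suc n" by (simp add: le_imp_power_dvd)
    then have "[x (Suc n) * w (Suc n) = 1] (mod p ^ n)" using w[of "Suc n"] cong_dvd_modulus by blast
    moreover have "[x (Suc n) * w (Suc n) = x n * w (Suc n)] (mod p ^ n)"
      by (rule cong_scalar_right[OF Zp_Suc_cong[OF x]])
    ultimately have "[x n * w (Suc n) = 1] (mod p ^ n)" using cong_sym cong_trans by blast
    then have "[w (Suc n) = w n] (mod p ^ n)" using cong_inverse_unique w by blast
    then show ?thesis using w[of n] by (simp add: cong_def)
  qed
  then have "w \<in> Zp p" unfolding Zp_def using w by auto
  then show ?thesis using w by blast
qed

lemma zdiv_ppow:
  assumes x: "x \<in> Zp p" and divisible: "x v = 0"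
  shows zdiv_ppow_Zp: "zdiv_ppow p v x \<in> Zp p"
    and zdiv_ppow_cong: "[x n = p ^ v * zdiv_ppow p v x n] (mod p ^ n)"
proof -
  define Q where "Q n = x (n + v) div p ^ v" for n
  have Q: "x (n + v) = p ^ v * Q n" for n
  proof -
    have "x (n + v) mod p ^ v = 0" using Zp_mod_le[OF x, of v "n + v"] divisible by simp
    then show ?thesis unfolding Q_def by (metis add.right_neutral mult_div_mod_eq)
  qed
  have "[Q (Suc n) = Q n] (mod p ^ n)" for n
  proof -
    have "[p ^ v * Q (Suc n) = p ^ v * Q n] (mod p ^ v * p ^ n)"
      using Zp_Suc_cong[OF x, of "n + v"] Q[of n] Q[of "Suc n"] by (simp add: power_add mult.commute)
    then have "p ^ v * p ^ n dvd p ^ v * (Q (Suc n) - Q n)"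
      by (simp add: cong_iff_dvd_diff right_diff_distrib)
    then show ?thesis using p_power_pos[of v] p_gt_1 by (simp add: cong_iff_dvd_diff)
  qed
  then show "zdiv_ppow p v x \<in> Zp p"
    unfolding zdiv_ppow_def Q_def[symmetric] by (rule Zp_reduceI)
  have "[x n = x (n + v)] (mod p ^ n)" using Zp_cong_le[OF x, of n "n + v"] by (simp add: cong_sym)
  also have "x (n + v) = p ^ v * Q n" by (rule Q)
  also have "[p ^ v * Q n = p ^ v * zdiv_ppow p v x n] (mod p ^ n)"
    unfolding zdiv_ppow_def Q_def by (rule cong_scalar_left) (simp add: cong_def)
  finally show "[x n = p ^ v * zdiv_ppow p v x n] (mod p ^ n)" .
qed

lemma zval:
  assumes x: "x \<in> Zp p" and nonzero: "x \<noteq> zzero"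
  shows zval_Suc_nonzero: "x (Suc (zval x)) \<noteq> 0"
    and zval_below: "n \<le> zval x \<Longrightarrow> x n = 0"
proof -
  obtain m where "x m \<noteq> 0" using nonzero by (auto simp: zzero_def fun_eq_iff)
  moreover have "x 0 = 0" using ZpD[OF x, of 0] by simp
  ultimately obtain k where "x (Suc k) \<noteq> 0" by (cases m) auto
  then show "x (Suc (zval x)) \<noteq> 0" unfolding zval_def by (rule LeastI)
  assume "n \<le> zval x"
  show "x n = 0"
  proof (cases n)
    case 0
    then show ?thesis using ZpD[OF x, of 0] by simp
  next
    case (Suc k)
    then have "k < zval x" using \<open>n \<le> zval x\<close> by simp
    then show ?thesis unfolding zval_def Suc using not_less_Least by blast
  qed
qed

lemma zdiv_ppow_zval_unit:
  assumes x: "x \<in> Zp p" and nonzero: "x \<noteq> zzero"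
  shows "zdiv_ppow p (zval x) x 1 \<noteq> 0"
proof
  let ?v = "zval x" and ?y = "zdiv_ppow p (zval x) x"
  have y: "?y \<in> Zp p" using zdiv_ppow_Zp[OF x zval_below[OF x nonzero]] by simp
  assume "?y 1 = 0"
  then have "p dvd ?y (Suc ?v)" using Zp_mod_le[OF y, of 1 "Suc ?v"] by (simp add: dvd_eq_mod_eq_0)
  then have "[p ^ ?v * ?y (Suc ?v) = 0] (mod p ^ Suc ?v)" by (simp add: cong_0_iff mult_dvd_mono)
  then have "[x (Suc ?v) = 0] (mod p ^ Suc ?v)"
    using zdiv_ppow_cong[OF x zval_below[OF x nonzero]] cong_trans by blast
  then show False
    using zval_Suc_nonzero[OF x nonzero] Zp_mod[OF x, of "Suc ?v"] by (simp only: cong_def) simp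
qed

lemma Zp_torsion_free:
  assumes x: "x \<in> Zp p" and torsion: "\<And>n. [p ^ k * x n = 0] (mod p ^ n)"
  shows "x = zzero"
proof
  fix n
  have "p ^ k * p ^ n dvd p ^ k * x (n + k)" using torsion[of "n + k"]
    by (simp add: cong_0_iff power_add mult.commute)
  then have "x (n + k) mod p ^ n = 0" using p_power_pos[of k] p_gt_1 by simp
  then show "x n = zzero n" using Zp_mod_le[OF x, of n "n + k"] by (simp add: zzero_def)
qed

end

section \<open>Linear combinations and spans in Z_p^d\<close>

definition reduced :: "int \<Rightarrow> zvec \<Rightarrow> bool" where
  "reduced p u \<longleftrightarrow> (\<forall>i n. u i n mod p ^ n = u i n)"

definition lcomb :: "int \<Rightarrow> nat \<Rightarrow> (nat \<Rightarrow> zp) \<Rightarrow> (nat \<Rightarrow> zvec) \<Rightarrow> zvec" where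
  "lcomb p m c B = (\<lambda>i n. (\<Sum>j<m. c j n * B j i n) mod p ^ n)"

definition zspan :: "int \<Rightarrow> nat \<Rightarrow> (nat \<Rightarrow> zvec) \<Rightarrow> zvec set" where
  "zspan p m B = {lcomb p m c B | c. \<forall>j<m. c j \<in> Zp p}"

definition vneg :: "int \<Rightarrow> zvec \<Rightarrow> zvec" where
  "vneg p u = vsmul p (zneg p (zof_int p 1)) u"

definition lin_indep :: "int \<Rightarrow> nat \<Rightarrow> (nat \<Rightarrow> zvec) \<Rightarrow> bool" where
  "lin_indep p m B \<longleftrightarrow> (\<forall>c c'. (\<forall>j<m. c j \<in> Zp p) \<longrightarrow> (\<forall>j<m. c' j \<in> Zp p) \<longrightarrow>
     lcomb p m c B = lcomb p m c' B \<longrightarrow> (\<forall>j<m. c j = c' j))"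

context prime_Zp
begin

lemma Zpvec_in_Zp: "v \<in> Zpvec p d \<Longrightarrow> i < d \<Longrightarrow> v i \<in> Zp p"
  and Zpvec_outside: "v \<in> Zpvec p d \<Longrightarrow> d \<le> i \<Longrightarrow> v i = (\<lambda>n. 0)"
  unfolding Zpvec_def by auto

lemma Zpvec_reduced: "v \<in> Zpvec p d \<Longrightarrow> reduced p v"
  unfolding reduced_def
  by (metis Zp_mod Zpvec_in_Zp Zpvec_outside leI mod_0)

lemma vec_eqI:
  assumes "reduced p u" "reduced p w" "\<And>i n. [u i n = w i n] (mod p ^ n)"
  shows "u = w"
  using assms unfolding reduced_def cong_def by (metis ext)

lemma reduced_lcomb [simp]: "reduced p (lcomb p m c B)"
  and reduced_vadd [simp]: "reduced p (vadd p u w)"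
  and reduced_vsmul [simp]: "reduced p (vsmul p k u)"
  and reduced_vneg [simp]: "reduced p (vneg p u)"
  and reduced_vzero [simp]: "reduced p vzero"
  unfolding reduced_def lcomb_def vadd_def zadd_def vsmul_def zmul_def vneg_def vzero_def
  by simp_all

lemma lcomb_Zpvec:
  assumes "\<And>j. j < m \<Longrightarrow> c j \<in> Zp p" "\<And>j. j < m \<Longrightarrow> B j \<in> Zpvec p d"
  shows "lcomb p m c B \<in> Zpvec p d"
  unfolding Zpvec_def
proof (intro CollectI conjI allI impI)
  fix i assume "i < d"
  show "lcomb p m c B i \<in> Zp p" unfolding lcomb_def
    by (rule Zp_reduceI, rule cong_sum, rule cong_mult)
       (use assms \<open>i < d\<close> in \<open>auto intro!: Zp_Suc_cong intro: Zpvec_in_Zp[of _ d]\<close>)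
next
  fix i assume "d \<le> i"
  then have "B j i = (\<lambda>n. 0)" if "j < m" for j using assms(2)[OF that] Zpvec_outside by blast
  then show "lcomb p m c B i = (\<lambda>n. 0)" unfolding lcomb_def by (simp add: fun_eq_iff)
qed

lemma vsmul_Zpvec:
  assumes "c \<in> Zp p" "x \<in> Zpvec p d"
  shows "vsmul p c x \<in> Zpvec p d"
  unfolding Zpvec_def
proof (intro CollectI conjI allI impI)
  fix i assume "i < d"
  then show "vsmul p c x i \<in> Zp p" unfolding vsmul_def using assms Zpvec_in_Zp by simp
next
  fix i assume "d \<le> i"
  then show "vsmul p c x i = (\<lambda>n. 0)"
    unfolding vsmul_def using Zpvec_outside[OF assms(2)] by (simp add: zmul_def)
qed

lemma lincomb_eq_lcomb:
  "length cs = m \<Longrightarrow> length bs = m \<Longrightarrow> lincomb p cs bs = lcomb p m (nth cs) (nth bs)"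
proof (induction cs arbitrary: bs m)
  case Nil
  then show ?case by (simp add: lincomb_def lcomb_def vzero_def)
next
  case (Cons c cs)
  then obtain b bs' where bs: "bs = b # bs'" and m: "m = Suc (length cs)" "length bs' = length cs"
    by (cases bs) auto
  have IH: "lincomb p cs bs' = lcomb p (length cs) (nth cs) (nth bs')" using Cons.IH m by simp
  have "lincomb p (c # cs) bs = vadd p (vsmul p c b) (lincomb p cs bs')"
    by (simp add: lincomb_def bs)
  also have "\<dots> = lcomb p m (nth (c # cs)) (nth bs)"
    unfolding IH lcomb_def m bs
    by (simp only: sum.lessThan_Suc_shift)
       (simp add: vadd_def vsmul_def zadd_def zmul_def mod_add_eq fun_eq_iff)
  finally show ?case .
qed

lemma lcomb_apply: "lcomb p m c B i n = (\<Sum>j<m. c j n * B j i n) mod p ^ n"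
  by (simp add: lcomb_def)

lemma lcomb_congI:
  assumes "\<And>j n i. j < m \<Longrightarrow> [c j n * B j i n = c' j n * B' j i n] (mod p ^ n)"
  shows "lcomb p m c B = lcomb p m c' B'"
  unfolding lcomb_def using assms by (auto simp: fun_eq_iff cong_def[symmetric] intro!: cong_sum)

lemma lcomb_cong_coeff:
  assumes "\<And>j n. j < m \<Longrightarrow> [c j n = c' j n] (mod p ^ n)"
  shows "lcomb p m c B = lcomb p m c' B"
  by (rule lcomb_congI) (use assms in \<open>auto intro: cong_mult\<close>)

lemma lcomb_cong:
  assumes "\<And>j. j < m \<Longrightarrow> c j = c' j" "\<And>j. j < m \<Longrightarrow> B j = B' j"
  shows "lcomb p m c B = lcomb p m c' B'"
  unfolding lcomb_def using assms by (auto intro!: sum.cong ext)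

lemma lcomb_0 [simp]: "lcomb p 0 c B = vzero"
  by (simp add: lcomb_def vzero_def)

lemma lcomb_zero: "lcomb p m (\<lambda>_. zzero) B = vzero"
  unfolding lcomb_def vzero_def zzero_def by simp

lemma sum_mod_mult_left [simp]:
  "(\<Sum>j\<in>A. (f j mod (m::int)) * g j) mod m = (\<Sum>j\<in>A. f j * g j) mod m"
proof -
  have "(\<Sum>j\<in>A. (f j mod m) * g j) mod m = (\<Sum>j\<in>A. ((f j mod m) * g j) mod m) mod m"
    by (simp add: mod_sum_eq)
  also have "\<dots> = (\<Sum>j\<in>A. f j * g j) mod m" by (simp add: mod_mult_left_eq mod_sum_eq)
  finally show ?thesis .
qed

lemma lcomb_add: "vadd p (lcomb p m c B) (lcomb p m c' B) = lcomb p m (\<lambda>j. zadd p (c j) (c' j)) B"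
  by (rule vec_eqI, simp, simp)
     (simp add: vadd_def zadd_def lcomb_def cong_def mod_add_eq sum.distrib[symmetric] distrib_right)

lemma lcomb_smul: "vsmul p k (lcomb p m c B) = lcomb p m (\<lambda>j. zmul p k (c j)) B"
  by (rule vec_eqI, simp, simp)
     (simp add: vsmul_def zmul_def lcomb_def cong_def mod_mult_right_eq sum_distrib_left mult.assoc)

lemma lcomb_Suc: "lcomb p (Suc m) c B = vadd p (lcomb p m c B) (vsmul p (c m) (B m))"
  by (rule vec_eqI, simp, simp)
     (simp add: vsmul_def zmul_def vadd_def zadd_def lcomb_def cong_def mod_add_eq)

lemma lcomb_extend:
  assumes "m \<le> m'" "\<And>j. m \<le> j \<Longrightarrow> j < m' \<Longrightarrow> c j = zzero"
  shows "lcomb p m' c B = lcomb p m c B"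
proof -
  have "(\<Sum>j<m'. c j n * B j i n) = (\<Sum>j<m. c j n * B j i n)" for i n
    by (rule sum.mono_neutral_right) (use assms in \<open>auto simp: zzero_def\<close>)
  then show ?thesis unfolding lcomb_def by simp
qed

lemma vsmul_vsmul: "vsmul p k (vsmul p k' x) = vsmul p (zmul p k k') x"
  by (simp add: vsmul_def zmul_def fun_eq_iff mod_mult_right_eq mod_mult_left_eq mult.assoc)

lemma vsmul_ppow_ppow: "vsmul p (ppow p a) (vsmul p (ppow p b) x) = vsmul p (ppow p (a + b)) x"
  by (simp add: vsmul_vsmul zmul_ppow)

lemma vsmul_ppow_0: "reduced p x \<Longrightarrow> vsmul p (ppow p 0) x = x"
  unfolding reduced_def
  by (simp add: vsmul_def zmul_def ppow_def zof_int_def fun_eq_iff mod_mult_left_eq)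

lemma vsmul_vadd: "vsmul p k (vadd p x y) = vadd p (vsmul p k x) (vsmul p k y)"
  by (simp add: vsmul_def vadd_def zmul_def zadd_def fun_eq_iff mod_arith_simps distrib_left)

lemma vsmul_vzero: "vsmul p k vzero = vzero"
  by (simp add: vsmul_def vzero_def zmul_def fun_eq_iff)

lemma vadd_assoc: "vadd p (vadd p a b) c = vadd p a (vadd p b c)"
  by (simp add: vadd_def zadd_def fun_eq_iff mod_arith_simps add.assoc)

lemma vadd_vneg_right:
  assumes "reduced p w"
  shows "vadd p (vadd p u w) (vneg p u) = w"
proof (rule vec_eqI)
  fix i n
  have "[(u i n + w i n) + (- 1) * u i n = w i n] (mod p ^ n)" by simp
  then show "[vadd p (vadd p u w) (vneg p u) i n = w i n] (mod p ^ n)"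
    by (simp add: vadd_def vsmul_def zadd_def zmul_def vneg_def zneg_def zof_int_def cong_def
        mod_arith_simps)
qed (use assms in simp_all)

lemma vadd_vneg_left:
  assumes "reduced p w"
  shows "vadd p u (vadd p (vneg p u) w) = w"
proof (rule vec_eqI)
  fix i n
  have "[u i n + ((- 1) * u i n + w i n) = w i n] (mod p ^ n)" by simp
  then show "[vadd p u (vadd p (vneg p u) w) i n = w i n] (mod p ^ n)"
    by (simp add: vadd_def vsmul_def zadd_def zmul_def vneg_def zneg_def zof_int_def cong_def
        mod_arith_simps)
qed (use assms in simp_all)

lemma vadd_diff:
  assumes "reduced p y"
  shows "y = vadd p x (vadd p y (vneg p x))"
proof (rule vec_eqI)
  fix i n
  have "[y i n = x i n + (y i n + (- 1) * x i n)] (mod p ^ n)" by simp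
  then show "[y i n = vadd p x (vadd p y (vneg p x)) i n] (mod p ^ n)"
    by (simp add: vadd_def vsmul_def zadd_def zmul_def vneg_def zneg_def zof_int_def cong_def
        mod_arith_simps)
qed (use assms in simp_all)

lemma lcomb_in_zspan: "(\<And>j. j < m \<Longrightarrow> c j \<in> Zp p) \<Longrightarrow> lcomb p m c B \<in> zspan p m B"
  unfolding zspan_def by blast

lemma zspanE:
  assumes "x \<in> zspan p m B"
  obtains c where "\<forall>j<m. c j \<in> Zp p" "x = lcomb p m c B"
  using assms unfolding zspan_def by blast

lemma zspan_0: "zspan p 0 B = {vzero}"
  unfolding zspan_def by auto

lemma zspan_vzero: "vzero \<in> zspan p m B"
  using lcomb_in_zspan[of m "\<lambda>_. zzero" B] lcomb_zero by simp

lemma zspan_vadd: "x \<in> zspan p m B \<Longrightarrow> y \<in> zspan p m B \<Longrightarrow> vadd p x y \<in> zspan p m B"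
  by (elim zspanE) (auto simp: lcomb_add intro!: lcomb_in_zspan)

lemma zspan_vsmul: "k \<in> Zp p \<Longrightarrow> x \<in> zspan p m B \<Longrightarrow> vsmul p k x \<in> zspan p m B"
  by (elim zspanE) (auto simp: lcomb_smul intro!: lcomb_in_zspan)

lemma zspan_vneg: "x \<in> zspan p m B \<Longrightarrow> vneg p x \<in> zspan p m B"
  unfolding vneg_def by (rule zspan_vsmul) simp_all

lemma zspan_Zpvec: "(\<And>j. j < m \<Longrightarrow> B j \<in> Zpvec p d) \<Longrightarrow> zspan p m B \<subseteq> Zpvec p d"
  by (auto elim!: zspanE intro!: lcomb_Zpvec)

lemma zspan_submodule: "(\<And>j. j < m \<Longrightarrow> B j \<in> Zpvec p d) \<Longrightarrow> submodule p d (zspan p m B)"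
  unfolding submodule_def using zspan_Zpvec zspan_vzero zspan_vadd zspan_vsmul by blast

lemma zspan_cong: "(\<And>j. j < m \<Longrightarrow> B j = B' j) \<Longrightarrow> zspan p m B = zspan p m B'"
  unfolding zspan_def using lcomb_cong[of m _ _ B B'] by metis

lemma zspan_mono:
  assumes "m \<le> m'"
  shows "zspan p m B \<subseteq> zspan p m' B"
proof
  fix x assume "x \<in> zspan p m B"
  then obtain c where c: "\<forall>j<m. c j \<in> Zp p" "x = lcomb p m c B" by (rule zspanE)
  let ?c = "\<lambda>j. if j < m then c j else zzero"
  have "x = lcomb p m ?c B" unfolding c(2) by (rule lcomb_cong) simp_all
  also have "\<dots> = lcomb p m' ?c B" by (rule lcomb_extend[symmetric]) (use assms in auto)
  finally show "x \<in> zspan p m' B" using c(1) by (auto intro!: lcomb_in_zspan)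
qed

lemma zspan_generator:
  assumes "j < m" "B j \<in> Zpvec p d"
  shows "B j \<in> zspan p m B"
proof -
  let ?c = "\<lambda>l. if l = j then zof_int p 1 else zzero"
  have "lcomb p m ?c B = B j"
  proof (rule vec_eqI)
    fix i n
    have "(\<Sum>l<m. ?c l n * B l i n) = (\<Sum>l<m. if l = j then (1 mod p ^ n) * B j i n else 0)"
      by (rule sum.cong) (simp_all add: zof_int_def zzero_def)
    also have "\<dots> = (1 mod p ^ n) * B j i n" using assms(1) by simp
    finally show "[lcomb p m ?c B i n = B j i n] (mod p ^ n)"
      by (simp add: lcomb_def cong_def mod_mult_left_eq)
  qed (use Zpvec_reduced assms in auto)
  moreover have "lcomb p m ?c B \<in> zspan p m B" by (rule lcomb_in_zspan) simp
  ultimately show ?thesis by simp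
qed

lemma zspan_subset_zspan:
  assumes "\<And>j. j < m \<Longrightarrow> B j \<in> zspan p m' E"
  shows "zspan p m B \<subseteq> zspan p m' E"
proof -
  have "lcomb p m c B \<in> zspan p m' E" if "\<forall>j<m. c j \<in> Zp p" for c
    using assms that
  proof (induction m)
    case (Suc m)
    then show ?case unfolding lcomb_Suc by (intro zspan_vadd zspan_vsmul Suc.IH) auto
  qed (simp add: zspan_vzero)
  then show ?thesis by (auto elim: zspanE)
qed

lemma zspan_cancel:
  assumes "vadd p u w \<in> zspan p m B" "u \<in> zspan p m B" "reduced p w"
  shows "w \<in> zspan p m B"
  using zspan_vadd[OF assms(1) zspan_vneg[OF assms(2)]] vadd_vneg_right[OF assms(3)] by simp

lemma lin_indepD:
  "lin_indep p m B \<Longrightarrow> \<forall>j<m. c j \<in> Zp p \<Longrightarrow> \<forall>j<m. c' j \<in> Zp p \<Longrightarrow>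
    lcomb p m c B = lcomb p m c' B \<Longrightarrow> j < m \<Longrightarrow> c j = c' j"
  unfolding lin_indep_def by blast

lemma lin_indep_Suc:
  assumes "lin_indep p (Suc m) B"
  shows "lin_indep p m B"
  unfolding lin_indep_def
proof (intro allI impI)
  fix c c' j assume c: "\<forall>j<m. c j \<in> Zp p" and c': "\<forall>j<m. c' j \<in> Zp p"
    and e: "lcomb p m c B = lcomb p m c' B" and "j < m"
  have ext: "lcomb p (Suc m) (c(m := zzero)) B = lcomb p m c B" for c
  proof -
    have "lcomb p (Suc m) (c(m := zzero)) B = lcomb p m (c(m := zzero)) B"
      by (rule lcomb_extend) auto
    also have "\<dots> = lcomb p m c B" by (rule lcomb_cong) auto
    finally show ?thesis .
  qed
  have Zp: "\<forall>j<Suc m. (c(m := zzero)) j \<in> Zp p" "\<forall>j<Suc m. (c'(m := zzero)) j \<in> Zp p"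
    using c c' by (auto simp: less_Suc_eq)
  have "lcomb p (Suc m) (c(m := zzero)) B = lcomb p (Suc m) (c'(m := zzero)) B"
    unfolding ext by (rule e)
  from lin_indepD[OF assms Zp this, of j] have "(c(m := zzero)) j = (c'(m := zzero)) j"
    using \<open>j < m\<close> by simp
  then show "c j = c' j" using \<open>j < m\<close> by simp
qed

end

section \<open>Bases of Z_p^d\<close>

definition Zpvec_basis :: "int \<Rightarrow> nat \<Rightarrow> (nat \<Rightarrow> zvec) \<Rightarrow> bool" where
  "Zpvec_basis p d E \<longleftrightarrow>
     (\<forall>j<d. E j \<in> Zpvec p d) \<and> Zpvec p d \<subseteq> zspan p d E \<and> lin_indep p d E"

definition unit_vec :: "int \<Rightarrow> nat \<Rightarrow> zvec" where
  "unit_vec p j = (\<lambda>i. if i = j then zof_int p 1 else zzero)"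

context prime_Zp
begin

lemma Zpvec_basisI:
  assumes "\<And>j. j < d \<Longrightarrow> E j \<in> Zpvec p d"
    and "\<And>x. x \<in> Zpvec p d \<Longrightarrow> \<exists>c. (\<forall>j<d. c j \<in> Zp p) \<and> x = lcomb p d c E"
    and "\<And>c c' j. \<forall>j<d. c j \<in> Zp p \<Longrightarrow> \<forall>j<d. c' j \<in> Zp p \<Longrightarrow>
           lcomb p d c E = lcomb p d c' E \<Longrightarrow> j < d \<Longrightarrow> c j = c' j"
  shows "Zpvec_basis p d E"
proof -
  have "Zpvec p d \<subseteq> zspan p d E" using assms(2) by (force simp: zspan_def)
  moreover have "lin_indep p d E" unfolding lin_indep_def using assms(3) by blast
  ultimately show ?thesis unfolding Zpvec_basis_def using assms(1) by blast
qed

lemma Zpvec_basisD: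
  assumes "Zpvec_basis p d E"
  shows Zpvec_basis_Zpvec: "\<And>j. j < d \<Longrightarrow> E j \<in> Zpvec p d"
    and Zpvec_basis_spans: "\<And>x. x \<in> Zpvec p d \<Longrightarrow> \<exists>c. (\<forall>j<d. c j \<in> Zp p) \<and> x = lcomb p d c E"
    and Zpvec_basis_unique: "\<And>c c' j. \<forall>j<d. c j \<in> Zp p \<Longrightarrow> \<forall>j<d. c' j \<in> Zp p \<Longrightarrow>
           lcomb p d c E = lcomb p d c' E \<Longrightarrow> j < d \<Longrightarrow> c j = c' j"
proof -
  show "\<And>j. j < d \<Longrightarrow> E j \<in> Zpvec p d" using assms unfolding Zpvec_basis_def by blast
  show "\<And>x. x \<in> Zpvec p d \<Longrightarrow> \<exists>c. (\<forall>j<d. c j \<in> Zp p) \<and> x = lcomb p d c E"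
    using assms unfolding Zpvec_basis_def by (auto elim!: zspanE[of _ d E])
  show "\<And>c c' j. \<forall>j<d. c j \<in> Zp p \<Longrightarrow> \<forall>j<d. c' j \<in> Zp p \<Longrightarrow>
           lcomb p d c E = lcomb p d c' E \<Longrightarrow> j < d \<Longrightarrow> c j = c' j"
    using assms lin_indepD unfolding Zpvec_basis_def by blast
qed

lemma lcomb_unit_vec: "lcomb p d c (unit_vec p) i n = (if i < d then c i n mod p ^ n else 0)"
proof -
  have "(\<Sum>l<d. c l n * unit_vec p l i n) = (\<Sum>l<d. if l = i then c i n * (1 mod p ^ n) else 0)"
    by (rule sum.cong) (auto simp: unit_vec_def zof_int_def zzero_def)
  also have "\<dots> = (if i < d then c i n * (1 mod p ^ n) else 0)" by simp
  finally show ?thesis by (simp add: lcomb_def mod_mult_right_eq)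
qed

lemma Zpvec_basis_unit_vec: "Zpvec_basis p d (unit_vec p)"
proof (rule Zpvec_basisI)
  fix j assume "j < d"
  then show "unit_vec p j \<in> Zpvec p d" unfolding Zpvec_def unit_vec_def by (auto simp: zzero_def)
next
  fix x assume x: "x \<in> Zpvec p d"
  have "x = lcomb p d x (unit_vec p)"
    by (rule vec_eqI)
       (use Zpvec_reduced[OF x] Zpvec_outside[OF x] in \<open>auto simp: lcomb_unit_vec cong_def\<close>)
  then show "\<exists>c. (\<forall>j<d. c j \<in> Zp p) \<and> x = lcomb p d c (unit_vec p)"
    using Zpvec_in_Zp[OF x] by blast
next
  fix c c' j assume c: "\<forall>j<d. c j \<in> Zp p" and c': "\<forall>j<d. c' j \<in> Zp p" and "j < d"
    and e: "lcomb p d c (unit_vec p) = lcomb p d c' (unit_vec p)"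
  show "c j = c' j"
  proof (rule Zp_eqI)
    fix n
    show "[c j n = c' j n] (mod p ^ n)"
      using fun_cong[OF fun_cong[OF e, of j], of n] \<open>j < d\<close> by (simp add: lcomb_unit_vec cong_def)
  qed (use c c' \<open>j < d\<close> in auto)
qed

lemma transpose_less: "a < d \<Longrightarrow> b < d \<Longrightarrow> j < d \<Longrightarrow> Transposition.transpose a b j < d"
  by (auto simp: Transposition.transpose_def)

lemma lcomb_transpose:
  assumes "a < d" "b < d"
  shows "lcomb p d c (E \<circ> Transposition.transpose a b) = lcomb p d (c \<circ> Transposition.transpose a b) E"
proof -
  let ?\<tau> = "Transposition.transpose a b"
  have "(\<Sum>j<d. c j n * E (?\<tau> j) i n) = (\<Sum>j<d. c (?\<tau> j) n * E j i n)" for i n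
    by (rule sum.reindex_bij_witness[of _ ?\<tau> ?\<tau>]) (use assms in \<open>auto intro: transpose_less\<close>)
  then show ?thesis by (simp add: lcomb_def)
qed

lemma Zpvec_basis_transpose:
  assumes E: "Zpvec_basis p d E" and ab: "a < d" "b < d"
  shows "Zpvec_basis p d (E \<circ> Transposition.transpose a b)"
proof (rule Zpvec_basisI)
  let ?\<tau> = "Transposition.transpose a b"
  fix j assume "j < d"
  then show "(E \<circ> ?\<tau>) j \<in> Zpvec p d"
    using Zpvec_basis_Zpvec[OF E] transpose_less[OF ab] by simp
next
  let ?\<tau> = "Transposition.transpose a b"
  fix x assume "x \<in> Zpvec p d"
  then obtain c where c: "\<forall>j<d. c j \<in> Zp p" "x = lcomb p d c E"
    using Zpvec_basis_spans[OF E] by blast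
  have "x = lcomb p d (c \<circ> ?\<tau>) (E \<circ> ?\<tau>)"
    using c(2) by (simp add: lcomb_transpose[OF ab] comp_assoc)
  moreover have "\<forall>j<d. (c \<circ> ?\<tau>) j \<in> Zp p" using c(1) transpose_less[OF ab] by simp
  ultimately show "\<exists>c. (\<forall>j<d. c j \<in> Zp p) \<and> x = lcomb p d c (E \<circ> ?\<tau>)" by blast
next
  let ?\<tau> = "Transposition.transpose a b"
  fix c c' j assume c: "\<forall>j<d. c j \<in> Zp p" and c': "\<forall>j<d. c' j \<in> Zp p"
    and e: "lcomb p d c (E \<circ> ?\<tau>) = lcomb p d c' (E \<circ> ?\<tau>)" and "j < d"
  have "(c \<circ> ?\<tau>) (?\<tau> j) = (c' \<circ> ?\<tau>) (?\<tau> j)"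
    by (rule Zpvec_basis_unique[OF E _ _ e[unfolded lcomb_transpose[OF ab]]])
       (use c c' transpose_less[OF ab] \<open>j < d\<close> in auto)
  then show "c j = c' j" by simp
qed

lemma lcomb_replace:
  assumes k: "k < d"
  shows "lcomb p d g (E(k := lcomb p d cc E)) =
         lcomb p d (\<lambda>j. zadd p (if j = k then zzero else g j) (zmul p (g k) (cc j))) E"
proof (rule vec_eqI)
  fix i n
  let ?q = "p ^ n" and ?S = "\<Sum>l<d. cc l n * E l i n"
  let ?H = "\<Sum>j<d. (if j = k then 0 else g j n) * E j i n"
  have "(\<Sum>j<d. g j n * (E(k := lcomb p d cc E)) j i n)
        = (\<Sum>j<d. (if j = k then 0 else g j n * E j i n) + (if j = k then g k n * (?S mod ?q) else 0))"
    by (rule sum.cong) (auto simp: lcomb_def)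
  also have "\<dots> = ?H + g k n * (?S mod ?q)"
    using k by (simp add: sum.distrib if_distrib[of "\<lambda>x. x * _"] cong: if_cong)
  finally have split: "(\<Sum>j<d. g j n * (E(k := lcomb p d cc E)) j i n) = ?H + g k n * (?S mod ?q)" .
  have "[?H + g k n * (?S mod ?q) = ?H + g k n * ?S] (mod ?q)"
    by (intro cong_add cong_scalar_left) (auto simp: cong_def)
  also have "?H + g k n * ?S = (\<Sum>j<d. ((if j = k then 0 else g j n) + g k n * cc j n) * E j i n)"
    by (simp add: sum.distrib sum_distrib_left distrib_right mult.assoc)
  also have "[\<dots> = (\<Sum>j<d. zadd p (if j = k then zzero else g j) (zmul p (g k) (cc j)) n * E j i n)]
      (mod ?q)"
    by (intro cong_sum cong_scalar_right) (auto simp: zadd_def zmul_def zzero_def cong_def mod_arith_simps)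
  finally show "[lcomb p d g (E(k := lcomb p d cc E)) i n =
         lcomb p d (\<lambda>j. zadd p (if j = k then zzero else g j) (zmul p (g k) (cc j))) E i n] (mod ?q)"
    unfolding lcomb_apply[of d g] split by (simp add: lcomb_apply cong_def)
qed simp_all

lemma exchange_spans:
  assumes E: "Zpvec_basis p d E" and k: "k < d" and cc: "\<forall>j<d. cc j \<in> Zp p"
    and w: "w \<in> Zp p" "\<forall>n. [cc k n * w n = 1] (mod p ^ n)" and x: "x \<in> Zpvec p d"
  shows "\<exists>g. (\<forall>j<d. g j \<in> Zp p) \<and> x = lcomb p d g (E(k := lcomb p d cc E))"
proof -
  obtain \<gamma> where \<gamma>: "\<forall>j<d. \<gamma> j \<in> Zp p" "x = lcomb p d \<gamma> E"
    using Zpvec_basis_spans[OF E x] by blast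
  define g where "g j = (if j = k then zmul p (\<gamma> k) w
      else zadd p (\<gamma> j) (zneg p (zmul p (zmul p (\<gamma> k) w) (cc j))))" for j
  have "lcomb p d g (E(k := lcomb p d cc E)) = lcomb p d \<gamma> E"
    unfolding lcomb_replace[OF k]
  proof (rule lcomb_cong_coeff)
    fix j n
    show "[zadd p (if j = k then zzero else g j) (zmul p (g k) (cc j)) n = \<gamma> j n] (mod p ^ n)"
    proof (cases "j = k")
      case True
      have "(\<gamma> k n * (cc k n * w n)) mod p ^ n = \<gamma> k n mod p ^ n"
        using cong_scalar_left[OF w(2)[rule_format, of n], of "\<gamma> k n"] by (simp add: cong_def)
      then show ?thesis using True
        by (simp add: g_def zadd_def zmul_def zzero_def cong_def mod_arith_simps ac_simps)
    qed (simp add: g_def zadd_def zmul_def zneg_def cong_def mod_arith_simps)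
  qed
  moreover have "\<forall>j<d. g j \<in> Zp p" using \<gamma>(1) w(1) cc k by (auto simp: g_def)
  ultimately show ?thesis using \<gamma>(2) by metis
qed

lemma exchange_coeff_unique:
  assumes E: "Zpvec_basis p d E" and k: "k < d" and cc: "\<forall>j<d. cc j \<in> Zp p"
    and w: "\<forall>n. [cc k n * w n = 1] (mod p ^ n)"
    and g: "\<forall>j<d. g j \<in> Zp p" and g': "\<forall>j<d. g' j \<in> Zp p"
    and e: "lcomb p d g (E(k := lcomb p d cc E)) = lcomb p d g' (E(k := lcomb p d cc E))"
    and j: "j < d"
  shows "g j = g' j"
proof -
  define D where "D g = (\<lambda>j. zadd p (if j = k then zzero else g j) (zmul p (g k) (cc j)))" for g
  have DZ: "\<forall>j<d. D g j \<in> Zp p" if "\<forall>j<d. g j \<in> Zp p" for g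
    using that cc k by (auto simp: D_def)
  have "lcomb p d (D g) E = lcomb p d (D g') E"
    using e unfolding lcomb_replace[OF k] D_def .
  then have DD: "D g i n = D g' i n" if "i < d" for i n
    using Zpvec_basis_unique[OF E DZ[OF g] DZ[OF g'] _ that] by simp
  have gk: "g k = g' k"
  proof (rule Zp_eqI)
    fix n
    have "[g k n * cc k n = g' k n * cc k n] (mod p ^ n)"
      using DD[OF k, of n] by (simp add: D_def zadd_def zmul_def zzero_def cong_def)
    then show "[g k n = g' k n] (mod p ^ n)" using cong_cancel_unit w by blast
  qed (use g g' k in auto)
  show ?thesis
  proof (cases "j = k")
    case False
    show ?thesis
    proof (rule Zp_eqI)
      fix n
      have "[g j n + (g k n * cc j n) mod p ^ n = g' j n + (g k n * cc j n) mod p ^ n] (mod p ^ n)"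
        using DD[OF j, of n] False gk by (simp add: D_def zadd_def zmul_def cong_def)
      then show "[g j n = g' j n] (mod p ^ n)" by (simp add: cong_add_rcancel)
    qed (use g g' j in auto)
  qed (use gk in simp)
qed

lemma Zpvec_basis_exchange:
  assumes E: "Zpvec_basis p d E" and k: "k < d" and cc: "\<forall>j<d. cc j \<in> Zp p"
    and unit: "cc k 1 \<noteq> 0"
  shows "Zpvec_basis p d (E(k := lcomb p d cc E))"
proof -
  obtain w where w: "w \<in> Zp p" "\<forall>n. [cc k n * w n = 1] (mod p ^ n)"
    using Zp_inverse_exists[of "cc k"] unit cc k by blast
  show ?thesis
  proof (rule Zpvec_basisI)
    fix j assume "j < d"
    then show "(E(k := lcomb p d cc E)) j \<in> Zpvec p d"
      using cc Zpvec_basis_Zpvec[OF E] by (auto intro!: lcomb_Zpvec)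
  qed (use exchange_spans[OF E k cc w] exchange_coeff_unique[OF E k cc w(2)] in blast)+
qed

lemma isolator_ppow: "isolator p S L = {x \<in> S. \<exists>k. vsmul p (ppow p k) x \<in> L}"
  unfolding isolator_def ppow_def ..

lemma subset_isolator:
  assumes "L \<subseteq> S" "S \<subseteq> Zpvec p d"
  shows "L \<subseteq> isolator p S L"
proof
  fix x assume "x \<in> L"
  then have "x \<in> S" "vsmul p (ppow p 0) x \<in> L"
    using assms vsmul_ppow_0[OF Zpvec_reduced, of x d] by auto
  then show "x \<in> isolator p S L" unfolding isolator_ppow by blast
qed

lemma isolator_mono: "L \<subseteq> L' \<Longrightarrow> isolator p S L \<subseteq> isolator p S L'"
  unfolding isolator_def by blast

text \<open>A coordinate outside the initial segment that is killed by a power of p vanishes.\<close>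

lemma isolator_zspan_basis:
  assumes E: "Zpvec_basis p d E" and md: "m \<le> d"
  shows "isolator p (Zpvec p d) (zspan p m E) = zspan p m E"
proof
  have "zspan p m E \<subseteq> Zpvec p d"
    by (rule zspan_Zpvec) (use Zpvec_basis_Zpvec[OF E] md in auto)
  then show "zspan p m E \<subseteq> isolator p (Zpvec p d) (zspan p m E)"
    by (rule subset_isolator[where d = d]) simp
next
  show "isolator p (Zpvec p d) (zspan p m E) \<subseteq> zspan p m E"
  proof
    fix x assume "x \<in> isolator p (Zpvec p d) (zspan p m E)"
    then obtain k where x: "x \<in> Zpvec p d" and "vsmul p (ppow p k) x \<in> zspan p m E"
      unfolding isolator_ppow by blast
    then obtain \<delta> where \<delta>: "\<forall>j<m. \<delta> j \<in> Zp p" "vsmul p (ppow p k) x = lcomb p m \<delta> E"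
      by (auto elim: zspanE)
    obtain \<gamma> where \<gamma>: "\<forall>j<d. \<gamma> j \<in> Zp p" "x = lcomb p d \<gamma> E"
      using Zpvec_basis_spans[OF E x] by blast
    let ?\<delta> = "\<lambda>j. if j < m then \<delta> j else zzero"
    have "lcomb p d (\<lambda>j. zmul p (ppow p k) (\<gamma> j)) E = vsmul p (ppow p k) x"
      using \<gamma>(2) by (simp add: lcomb_smul)
    also have "\<dots> = lcomb p m ?\<delta> E" using \<delta>(2) by (auto intro: lcomb_cong)
    also have "\<dots> = lcomb p d ?\<delta> E" by (rule lcomb_extend[symmetric]) (use md in auto)
    finally have eq: "lcomb p d (\<lambda>j. zmul p (ppow p k) (\<gamma> j)) E = lcomb p d ?\<delta> E" .
    have "\<gamma> j = zzero" if "m \<le> j" "j < d" for j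
    proof (rule Zp_torsion_free)
      have "zmul p (ppow p k) (\<gamma> j) = zzero"
        using Zpvec_basis_unique[OF E _ _ eq \<open>j < d\<close>] \<gamma>(1) \<delta>(1) that by auto
      then have "zmul p (ppow p k) (\<gamma> j) n = 0" for n by (simp add: zzero_def)
      then show "[p ^ k * \<gamma> j n = 0] (mod p ^ n)" for n
        by (simp add: zmul_def ppow_def zof_int_def cong_def mod_mult_left_eq)
    qed (use \<gamma>(1) that in auto)
    then have "x = lcomb p m \<gamma> E" using \<gamma>(2) lcomb_extend[OF md, of \<gamma> E] by simp
    then show "x \<in> zspan p m E" using \<gamma>(1) md by (auto intro!: lcomb_in_zspan)
  qed
qed

lemma zspan_basis_coeff_unique:
  assumes E: "Zpvec_basis p d E" and md: "m \<le> d"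
    and c: "\<forall>j<m. c j \<in> Zp p" and c': "\<forall>j<m. c' j \<in> Zp p"
    and e: "lcomb p m c E = lcomb p m c' E" and j: "j < m"
  shows "c j = c' j"
proof -
  let ?ext = "\<lambda>c j. if j < m then c j else zzero"
  have ext: "lcomb p d (?ext c) E = lcomb p m c E" for c
  proof -
    have "lcomb p d (?ext c) E = lcomb p m (?ext c) E" by (rule lcomb_extend[OF md]) simp
    also have "\<dots> = lcomb p m c E" by (rule lcomb_cong) simp_all
    finally show ?thesis .
  qed
  have eq: "lcomb p d (?ext c) E = lcomb p d (?ext c') E" unfolding ext by (rule e)
  have "\<forall>j<d. ?ext c j \<in> Zp p" "\<forall>j<d. ?ext c' j \<in> Zp p" using c c' by auto
  from Zpvec_basis_unique[OF E this eq, of j] have "?ext c j = ?ext c' j" using j md by simp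
  then show ?thesis using j by simp
qed

lemma is_basis_zspan:
  assumes E: "Zpvec_basis p d E" and md: "m \<le> d"
  shows "is_basis p (zspan p m E) (map E [0..<m])"
  unfolding is_basis_def
proof (intro conjI ballI)
  show "set (map E [0..<m]) \<subseteq> zspan p m E"
    using zspan_generator[of _ m E d] Zpvec_basis_Zpvec[OF E] md by auto
next
  fix x assume "x \<in> zspan p m E"
  then obtain c where c: "\<forall>j<m. c j \<in> Zp p" "x = lcomb p m c E" by (rule zspanE)
  have lin: "lincomb p cs (map E [0..<m]) = lcomb p m (nth cs) E" if "length cs = m" for cs
  proof -
    have "lincomb p cs (map E [0..<m]) = lcomb p m (nth cs) (nth (map E [0..<m]))"
      by (rule lincomb_eq_lcomb) (use that in simp_all)
    also have "\<dots> = lcomb p m (nth cs) E" by (rule lcomb_cong) simp_all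
    finally show ?thesis .
  qed
  show "\<exists>!cs. length cs = length (map E [0..<m]) \<and> set cs \<subseteq> Zp p \<and>
      x = lincomb p cs (map E [0..<m])"
  proof (rule ex1I[of _ "map c [0..<m]"])
    have "lcomb p m (nth (map c [0..<m])) E = lcomb p m c E" by (rule lcomb_cong) simp_all
    then show "length (map c [0..<m]) = length (map E [0..<m]) \<and> set (map c [0..<m]) \<subseteq> Zp p \<and>
        x = lincomb p (map c [0..<m]) (map E [0..<m])"
      using c lin[of "map c [0..<m]"] by auto
  next
    fix cs assume cs: "length cs = length (map E [0..<m]) \<and> set cs \<subseteq> Zp p \<and>
        x = lincomb p cs (map E [0..<m])"
    then have eq: "lcomb p m (nth cs) E = lcomb p m c E" using lin c(2) by simp
    have "\<forall>j<m. cs ! j \<in> Zp p" using cs nth_mem by auto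
    then have "cs ! j = c j" if "j < m" for j
      using zspan_basis_coeff_unique[OF E md _ c(1) eq that] by blast
    then show "cs = map c [0..<m]" using cs by (auto intro: nth_equalityI)
  qed
qed

end


section \<open>The isolator of the span of an independent family\<close>

definition isolating_basis ::
  "int \<Rightarrow> nat \<Rightarrow> nat \<Rightarrow> (nat \<Rightarrow> zvec) \<Rightarrow> (nat \<Rightarrow> zvec) \<Rightarrow> nat \<Rightarrow> bool" where
  "isolating_basis p d m B E N \<longleftrightarrow> Zpvec_basis p d E \<and> m \<le> d \<and>
     isolator p (Zpvec p d) (zspan p m B) \<subseteq> zspan p m E \<and>
     (\<forall>x\<in>zspan p m E. vsmul p (ppow p N) x \<in> zspan p m B)"

context prime_Zp
begin

lemma tail_coeff_nonzero:
  assumes indep: "lin_indep p (Suc m) B" and md: "m \<le> d"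
    and bound: "\<forall>x\<in>zspan p m E. vsmul p (ppow p N) x \<in> zspan p m B"
    and c: "\<forall>j<d. c j \<in> Zp p" and Bm: "B m = lcomb p d c E"
  shows "\<exists>j. m \<le> j \<and> j < d \<and> c j \<noteq> zzero"
proof (rule ccontr)
  assume "\<not> ?thesis"
  then have "B m = lcomb p m c E" using Bm lcomb_extend[OF md, of c E] by auto
  then have "vsmul p (ppow p N) (B m) \<in> zspan p m B"
    using bound c md by (auto intro!: lcomb_in_zspan)
  then obtain \<alpha> where \<alpha>: "\<forall>j<m. \<alpha> j \<in> Zp p" "vsmul p (ppow p N) (B m) = lcomb p m \<alpha> B"
    by (rule zspanE)
  define \<alpha>' where "\<alpha>' = \<alpha>(m := zneg p (ppow p N))"
  have "lcomb p m \<alpha>' B = lcomb p m \<alpha> B" unfolding \<alpha>'_def by (rule lcomb_cong) simp_all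
  then have "lcomb p (Suc m) \<alpha>' B =
      vadd p (vsmul p (ppow p N) (B m)) (vsmul p (zneg p (ppow p N)) (B m))"
    by (simp add: lcomb_Suc \<alpha>(2) \<alpha>'_def)
  also have "\<dots> = vzero"
  proof (rule vec_eqI)
    fix i n
    have "[p ^ N * B m i n + (- (p ^ N)) * B m i n = 0] (mod p ^ n)" by simp
    then show "[vadd p (vsmul p (ppow p N) (B m)) (vsmul p (zneg p (ppow p N)) (B m)) i n =
        vzero i n] (mod p ^ n)"
      by (simp add: vadd_def vsmul_def zmul_def zadd_def zneg_def ppow_def zof_int_def vzero_def
          cong_def mod_arith_simps)
  qed simp_all
  also have "\<dots> = lcomb p (Suc m) (\<lambda>_. zzero) B" by (rule lcomb_zero[symmetric])
  finally have eq: "lcomb p (Suc m) \<alpha>' B = lcomb p (Suc m) (\<lambda>_. zzero) B" .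
  have "\<forall>j<Suc m. \<alpha>' j \<in> Zp p" using \<alpha>(1) by (auto simp: \<alpha>'_def less_Suc_eq)
  from lin_indepD[OF indep this _ eq] have "\<alpha>' m = zzero" by simp
  then show False using zneg_ppow_nonzero by (simp add: \<alpha>'_def)
qed

text \<open>Among the coordinates j in [m, d), divide by p^v for v the least valuation; the quotient
  at a coordinate j0 where this valuation is attained is then a unit.\<close>

lemma tail_coeffs_common_factor:
  fixes c :: "nat \<Rightarrow> zp"
  assumes c: "\<forall>j<d. c j \<in> Zp p" and j1: "m \<le> j1" "j1 < d" "c j1 \<noteq> zzero"
  obtains v j0 q where "m \<le> j0" "j0 < d" "q j0 1 \<noteq> 0" "\<forall>j<d. q j \<in> Zp p" "\<forall>j<m. q j = zzero"
    "\<And>j n. m \<le> j \<Longrightarrow> j < d \<Longrightarrow> [c j n = p ^ v * q j n] (mod p ^ n)"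
proof -
  define J where "J = {j. m \<le> j \<and> j < d \<and> c j \<noteq> zzero}"
  have "finite J" unfolding J_def by (rule finite_subset[of _ "{..<d}"]) auto
  then have J: "finite J" "j1 \<in> J" unfolding J_def using j1 by auto
  define v where "v = Min ((\<lambda>j. zval (c j)) ` J)"
  have "v \<in> (\<lambda>j. zval (c j)) ` J" unfolding v_def using J by (intro Min_in) auto
  then obtain j0 where j0: "j0 \<in> J" "zval (c j0) = v" by blast
  have v_min: "v \<le> zval (c j)" if "j \<in> J" for j
    unfolding v_def by (rule Min_le) (use J(1) that in simp_all)
  have "c j v = 0" if "m \<le> j" "j < d" for j
  proof (cases "c j = zzero")
    case False
    then have "j \<in> J" using that unfolding J_def by simp
    then show ?thesis using zval_below[of "c j" v] v_min c that False by simp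
  qed (simp add: zzero_def)
  then have tail: "zdiv_ppow p v (c j) \<in> Zp p"
    "[c j n = p ^ v * zdiv_ppow p v (c j) n] (mod p ^ n)" if "m \<le> j" "j < d" for j n
    using zdiv_ppow[of "c j" v] c that by simp_all
  define q where "q j = (if m \<le> j \<and> j < d then zdiv_ppow p v (c j) else zzero)" for j
  have j0': "m \<le> j0" "j0 < d" "c j0 \<noteq> zzero" using j0(1) unfolding J_def by auto
  then have "q j0 1 \<noteq> 0"
    using zdiv_ppow_zval_unit[of "c j0"] c j0(2) unfolding q_def by simp
  moreover have "\<forall>j<d. q j \<in> Zp p" "\<forall>j<m. q j = zzero" using tail by (simp_all add: q_def)
  moreover have "[c j n = p ^ v * q j n] (mod p ^ n)" if "m \<le> j" "j < d" for j n
    using tail(2)[OF that] that by (simp add: q_def)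
  ultimately show ?thesis using that[of j0 q v] j0' by blast
qed

lemma lcomb_split_tail:
  assumes md: "m \<le> d" and q_low: "\<forall>j<m. q j = zzero"
    and factor: "\<And>j n. m \<le> j \<Longrightarrow> j < d \<Longrightarrow> [c j n = p ^ v * q j n] (mod p ^ n)"
  shows "lcomb p d c E = vadd p (lcomb p m c E) (vsmul p (ppow p v) (lcomb p d q E))"
proof -
  define c_low where "c_low j = (if j < m then c j else zzero)" for j
  have "lcomb p d c E = lcomb p d (\<lambda>j. zadd p (c_low j) (zmul p (ppow p v) (q j))) E"
  proof (rule lcomb_cong_coeff)
    fix j n assume "j < d"
    show "[c j n = zadd p (c_low j) (zmul p (ppow p v) (q j)) n] (mod p ^ n)"
    proof (cases "j < m")
      case False
      then have "[c j n = p ^ v * q j n] (mod p ^ n)" using factor \<open>j < d\<close> by simp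
      then show ?thesis using False
        by (simp add: c_low_def zadd_def zmul_def zzero_def ppow_def zof_int_def cong_def mod_arith_simps)
    qed (use q_low in \<open>simp add: c_low_def zadd_def zmul_def zzero_def cong_def\<close>)
  qed
  also have "\<dots> = vadd p (lcomb p d c_low E) (lcomb p d (\<lambda>j. zmul p (ppow p v) (q j)) E)"
    by (rule lcomb_add[symmetric])
  also have "lcomb p d c_low E = lcomb p m c E"
    using lcomb_extend[OF md, of c_low E] lcomb_cong[of m c_low c E E] by (simp add: c_low_def)
  finally show ?thesis by (simp add: lcomb_smul)
qed

lemma ppow_zspan_Suc_bound:
  assumes bound: "\<forall>x\<in>zspan p m E. vsmul p (ppow p N) x \<in> zspan p m B"
    and Bm: "B m = vadd p y (vsmul p (ppow p v) (E m))" "B m \<in> Zpvec p d"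
    and y: "y \<in> zspan p m E"
  shows "\<forall>x\<in>zspan p (Suc m) E. vsmul p (ppow p (N + v)) x \<in> zspan p (Suc m) B"
proof
  have low: "vsmul p (ppow p N) x \<in> zspan p (Suc m) B" if "x \<in> zspan p m E" for x
    using bound that zspan_mono[of m "Suc m"] by auto
  have "vsmul p (ppow p N) (B m) \<in> zspan p (Suc m) B"
    using zspan_generator[of m "Suc m" B d] Bm(2) by (intro zspan_vsmul) simp_all
  then have top: "vsmul p (ppow p N) (vsmul p (ppow p v) (E m)) \<in> zspan p (Suc m) B"
    unfolding Bm(1) vsmul_vadd by (rule zspan_cancel[OF _ low[OF y]]) simp
  fix x assume "x \<in> zspan p (Suc m) E"
  then obtain \<gamma> where \<gamma>: "\<forall>j<Suc m. \<gamma> j \<in> Zp p" "x = lcomb p (Suc m) \<gamma> E" by (rule zspanE)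
  have "vsmul p (ppow p (N + v)) (lcomb p m \<gamma> E) =
      vsmul p (ppow p v) (vsmul p (ppow p N) (lcomb p m \<gamma> E))"
    by (simp add: vsmul_ppow_ppow add.commute)
  also have "\<dots> \<in> zspan p (Suc m) B"
    using \<gamma>(1) by (intro zspan_vsmul low lcomb_in_zspan) simp_all
  finally have 1: "vsmul p (ppow p (N + v)) (lcomb p m \<gamma> E) \<in> zspan p (Suc m) B" .
  have "vsmul p (ppow p (N + v)) (vsmul p (\<gamma> m) (E m)) =
      vsmul p (\<gamma> m) (vsmul p (ppow p N) (vsmul p (ppow p v) (E m)))"
    by (simp add: vsmul_vsmul zmul_ppow zmul_commute)
  also have "\<dots> \<in> zspan p (Suc m) B" by (rule zspan_vsmul) (use \<gamma>(1) top in simp_all)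
  finally have 2: "vsmul p (ppow p (N + v)) (vsmul p (\<gamma> m) (E m)) \<in> zspan p (Suc m) B" .
  show "vsmul p (ppow p (N + v)) x \<in> zspan p (Suc m) B"
    unfolding \<gamma>(2) lcomb_Suc vsmul_vadd using 1 2 by (rule zspan_vadd)
qed

lemma zspan_Suc_subset:
  assumes B: "\<forall>j<Suc m. B j \<in> Zpvec p d"
    and iso_sub: "isolator p (Zpvec p d) (zspan p m B) \<subseteq> zspan p m E"
    and Bm: "B m = vadd p y (vsmul p c (E m))" and y: "y \<in> zspan p m E"
    and c: "c \<in> Zp p" and Em: "E m \<in> Zpvec p d"
  shows "zspan p (Suc m) B \<subseteq> zspan p (Suc m) E"
proof (rule zspan_subset_zspan)
  fix j assume "j < Suc m"
  then consider "j < m" | "j = m" by linarith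
  then show "B j \<in> zspan p (Suc m) E"
  proof cases
    case 1
    have "zspan p m B \<subseteq> Zpvec p d" using B by (intro zspan_Zpvec) auto
    then have "zspan p m B \<subseteq> isolator p (Zpvec p d) (zspan p m B)"
      by (rule subset_isolator[where d = d]) simp
    moreover have "B j \<in> zspan p m B" using 1 B by (intro zspan_generator[where d = d]) auto
    ultimately have "B j \<in> zspan p m E" using iso_sub by blast
    then show ?thesis using zspan_mono[of m "Suc m" E] by auto
  next
    case 2
    have "E m \<in> zspan p (Suc m) E" using Em by (intro zspan_generator[where d = d]) auto
    then show ?thesis unfolding 2 Bm using y c zspan_mono[of m "Suc m" E]
      by (intro zspan_vadd zspan_vsmul) auto
  qed
qed

lemma isolating_basis_Suc:
  assumes B: "\<forall>j<Suc m. B j \<in> Zpvec p d" and indep: "lin_indep p (Suc m) B"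
    and iso: "isolating_basis p d m B E' N'"
  shows "\<exists>E N. isolating_basis p d (Suc m) B E N"
proof -
  have E': "Zpvec_basis p d E'" and md: "m \<le> d"
    and iso_sub: "isolator p (Zpvec p d) (zspan p m B) \<subseteq> zspan p m E'"
    and bound: "\<forall>x\<in>zspan p m E'. vsmul p (ppow p N') x \<in> zspan p m B"
    using iso unfolding isolating_basis_def by blast+
  obtain c where c: "\<forall>j<d. c j \<in> Zp p" "B m = lcomb p d c E'"
    using Zpvec_basis_spans[OF E'] B by blast
  then obtain j1 where "m \<le> j1" "j1 < d" "c j1 \<noteq> zzero"
    using tail_coeff_nonzero[OF indep md bound] by blast
  then obtain j0 q v where j0: "m \<le> j0" "j0 < d" and q: "q j0 1 \<noteq> 0" "\<forall>j<d. q j \<in> Zp p"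
    "\<forall>j<m. q j = zzero" "\<And>j n. m \<le> j \<Longrightarrow> j < d \<Longrightarrow> [c j n = p ^ v * q j n] (mod p ^ n)"
    using tail_coeffs_common_factor[OF c(1)] by metis
  define E where "E = E'(j0 := lcomb p d q E') \<circ> Transposition.transpose j0 m"
  have Sd: "Suc m \<le> d" using j0 by simp
  have E: "Zpvec_basis p d E"
    unfolding E_def using Zpvec_basis_exchange[OF E' j0(2) q(2,1)] j0 Sd
    by (intro Zpvec_basis_transpose) simp_all
  have E_low: "E j = E' j" if "j < m" for j using that j0 by (simp add: E_def)
  have E_m: "E m = lcomb p d q E'" by (simp add: E_def)
  have span_low: "zspan p m E = zspan p m E'" using E_low by (rule zspan_cong)
  have Bm: "B m = vadd p (lcomb p m c E') (vsmul p (ppow p v) (E m))"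
    unfolding E_m c(2) using md q(3,4) by (rule lcomb_split_tail)
  have low: "lcomb p m c E' \<in> zspan p m E" unfolding span_low using c(1) md by (auto intro: lcomb_in_zspan)
  have "zspan p (Suc m) B \<subseteq> zspan p (Suc m) E"
    using Zpvec_basis_Zpvec[OF E] Sd
    by (intro zspan_Suc_subset[OF B iso_sub[folded span_low] Bm low ppow_Zp]) simp
  then have "isolator p (Zpvec p d) (zspan p (Suc m) B) \<subseteq> zspan p (Suc m) E"
    using isolator_mono isolator_zspan_basis[OF E Sd] by metis
  moreover have "\<forall>x\<in>zspan p (Suc m) E. vsmul p (ppow p (N' + v)) x \<in> zspan p (Suc m) B"
    using ppow_zspan_Suc_bound[OF bound[folded span_low] Bm B[rule_format, OF lessI] low] .
  ultimately show ?thesis using E Sd unfolding isolating_basis_def by blast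
qed

lemma isolating_basis_exists:
  "\<forall>j<m. B j \<in> Zpvec p d \<Longrightarrow> lin_indep p m B \<Longrightarrow> \<exists>E N. isolating_basis p d m B E N"
proof (induction m)
  case 0
  have "isolator p (Zpvec p d) (zspan p 0 B) \<subseteq> zspan p 0 (unit_vec p)"
    using isolator_zspan_basis[OF Zpvec_basis_unit_vec, of 0 d] by (simp add: zspan_0)
  then have "isolating_basis p d 0 B (unit_vec p) 0"
    by (simp add: isolating_basis_def Zpvec_basis_unit_vec zspan_0 vsmul_vzero)
  then show ?case by blast
next
  case (Suc m)
  then show ?case using isolating_basis_Suc lin_indep_Suc by (meson less_SucI)
qed

end


section \<open>The rank of a free submodule\<close>

definition mod_p_class :: "int \<Rightarrow> zvec set \<Rightarrow> zvec \<Rightarrow> zvec set" where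
  "mod_p_class p M x = {y \<in> M. \<exists>z\<in>M. y = vadd p x (vsmul p (ppow p 1) z)}"

context prime_Zp
begin

lemma lincomb_in_submodule:
  assumes M: "submodule p d M"
  shows "set bs \<subseteq> M \<Longrightarrow> set cs \<subseteq> Zp p \<Longrightarrow> lincomb p cs bs \<in> M"
proof (induction cs arbitrary: bs)
  case (Cons c cs)
  then show ?case
    using M by (cases bs) (auto simp: lincomb_def submodule_def)
qed (use M in \<open>simp add: lincomb_def submodule_def\<close>)

lemma lincomb_map: "length bs = m \<Longrightarrow> lincomb p (map c [0..<m]) bs = lcomb p m c (nth bs)"
  using lincomb_eq_lcomb[of "map c [0..<m]" m bs] lcomb_cong[of m "nth (map c [0..<m])" c] by simp

lemma is_basis_zspan_eq:
  assumes M: "submodule p d M" and bs: "is_basis p M bs"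
  shows "M = zspan p (length bs) (nth bs)"
proof
  show "M \<subseteq> zspan p (length bs) (nth bs)"
  proof
    fix x assume "x \<in> M"
    then obtain cs where cs: "length cs = length bs" "set cs \<subseteq> Zp p" "x = lincomb p cs bs"
      using bs unfolding is_basis_def by blast
    then show "x \<in> zspan p (length bs) (nth bs)"
      using lincomb_eq_lcomb[OF cs(1) refl] nth_mem by (auto intro!: lcomb_in_zspan)
  qed
  show "zspan p (length bs) (nth bs) \<subseteq> M"
  proof
    fix x assume "x \<in> zspan p (length bs) (nth bs)"
    then obtain c where c: "\<forall>j<length bs. c j \<in> Zp p" "x = lcomb p (length bs) c (nth bs)"
      by (rule zspanE)
    have "lincomb p (map c [0..<length bs]) bs \<in> M"
      using bs c(1) unfolding is_basis_def by (intro lincomb_in_submodule[OF M]) auto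
    then show "x \<in> M" using c(2) by (simp add: lincomb_map)
  qed
qed

lemma is_basis_lin_indep:
  assumes M: "submodule p d M" and bs: "is_basis p M bs"
  shows "lin_indep p (length bs) (nth bs)"
  unfolding lin_indep_def
proof (intro allI impI)
  let ?m = "length bs"
  fix c c' j assume c: "\<forall>j<?m. c j \<in> Zp p" and c': "\<forall>j<?m. c' j \<in> Zp p"
    and e: "lcomb p ?m c (nth bs) = lcomb p ?m c' (nth bs)" and "j < ?m"
  let ?x = "lcomb p ?m c (nth bs)"
  have "?x \<in> M" using is_basis_zspan_eq[OF M bs] c by (auto intro: lcomb_in_zspan)
  then have "\<exists>!cs. length cs = ?m \<and> set cs \<subseteq> Zp p \<and> ?x = lincomb p cs bs"
    using bs unfolding is_basis_def by blast
  moreover have "length (map c [0..<?m]) = ?m \<and> set (map c [0..<?m]) \<subseteq> Zp p \<and>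
      ?x = lincomb p (map c [0..<?m]) bs"
    using c by (auto simp: lincomb_map)
  moreover have "length (map c' [0..<?m]) = ?m \<and> set (map c' [0..<?m]) \<subseteq> Zp p \<and>
      ?x = lincomb p (map c' [0..<?m]) bs"
    using c' e by (auto simp: lincomb_map)
  ultimately have "map c [0..<?m] = map c' [0..<?m]" by blast
  then show "c j = c' j" using \<open>j < ?m\<close> by (simp add: map_eq_conv)
qed

lemma lcomb_in_mod_p_class:
  assumes c: "\<forall>j<m. c j \<in> Zp p" and c': "\<forall>j<m. c' j \<in> Zp p" and same: "\<forall>j<m. c' j 1 = c j 1"
  shows "lcomb p m c' B \<in> mod_p_class p (zspan p m B) (lcomb p m c B)"
proof -
  define \<delta> where "\<delta> j = zadd p (c' j) (zneg p (c j))" for j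
  have \<delta>: "\<delta> j \<in> Zp p" "\<delta> j 1 = 0" if "j < m" for j
    using c c' same that by (simp add: \<delta>_def, simp add: \<delta>_def zadd_def zneg_def mod_arith_simps)
  define e where "e j = zdiv_ppow p 1 (\<delta> j)" for j
  have "vadd p (lcomb p m c B) (vsmul p (ppow p 1) (lcomb p m e B))
      = lcomb p m (\<lambda>j. zadd p (c j) (zmul p (ppow p 1) (e j))) B"
    by (simp add: lcomb_smul lcomb_add)
  also have "\<dots> = lcomb p m c' B"
  proof (rule lcomb_cong_coeff)
    fix j n assume "j < m"
    have "[p * e j n = c' j n - c j n] (mod p ^ n)"
      using zdiv_ppow_cong[OF \<delta>[OF \<open>j < m\<close>], of n] cong_sym
      by (force simp: e_def \<delta>_def zadd_def zneg_def cong_def mod_arith_simps)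
    then have "[c j n + p * e j n = c j n + (c' j n - c j n)] (mod p ^ n)"
      by (rule cong_add[OF cong_refl])
    then show "[zadd p (c j) (zmul p (ppow p 1) (e j)) n = c' j n] (mod p ^ n)"
      by (simp add: zadd_def zmul_def ppow_def zof_int_def cong_def mod_arith_simps)
  qed
  finally have eq: "vadd p (lcomb p m c B) (vsmul p (ppow p 1) (lcomb p m e B)) = lcomb p m c' B" .
  have "lcomb p m e B \<in> zspan p m B"
    using zdiv_ppow_Zp[OF \<delta>] by (auto simp: e_def intro!: lcomb_in_zspan)
  moreover have "lcomb p m c' B \<in> zspan p m B" using c' by (simp add: lcomb_in_zspan)
  ultimately show ?thesis unfolding mod_p_class_def using eq[symmetric] by blast
qed

lemma mod_p_class_residues:
  assumes indep: "lin_indep p m B" and c: "\<forall>j<m. c j \<in> Zp p" and c': "\<forall>j<m. c' j \<in> Zp p"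
    and "lcomb p m c' B \<in> mod_p_class p (zspan p m B) (lcomb p m c B)" and "j < m"
  shows "c' j 1 = c j 1"
proof -
  obtain z where "z \<in> zspan p m B" "lcomb p m c' B = vadd p (lcomb p m c B) (vsmul p (ppow p 1) z)"
    using assms(4) unfolding mod_p_class_def by blast
  moreover from this(1) obtain e where e: "\<forall>j<m. e j \<in> Zp p" "z = lcomb p m e B" by (rule zspanE)
  ultimately have "lcomb p m c' B = lcomb p m (\<lambda>j. zadd p (c j) (zmul p (ppow p 1) (e j))) B"
    by (simp add: lcomb_smul lcomb_add)
  from lin_indepD[OF indep _ _ this] c c' e(1) \<open>j < m\<close>
  have "c' j = zadd p (c j) (zmul p (ppow p 1) (e j))" by simp
  then have "c' j 1 = (c j 1 + ((p mod p) * e j 1) mod p) mod p"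
    by (simp add: zadd_def zmul_def ppow_def zof_int_def)
  also have "\<dots> = c j 1" using Zp_mod[of "c j" 1] c \<open>j < m\<close> by simp
  finally show ?thesis .
qed

lemma lcomb_mod_p_class_iff:
  assumes "lin_indep p m B" "\<forall>j<m. c j \<in> Zp p" "\<forall>j<m. c' j \<in> Zp p"
  shows "lcomb p m c' B \<in> mod_p_class p (zspan p m B) (lcomb p m c B) \<longleftrightarrow> (\<forall>j<m. c' j 1 = c j 1)"
  using lcomb_in_mod_p_class[OF assms(2,3)] mod_p_class_residues[OF assms] by blast

lemma mod_p_class_eq:
  assumes indep: "lin_indep p m B"
    and c: "\<forall>j<m. c j \<in> Zp p" and c': "\<forall>j<m. c' j \<in> Zp p" and same: "\<forall>j<m. c j 1 = c' j 1"
  shows "mod_p_class p (zspan p m B) (lcomb p m c B) = mod_p_class p (zspan p m B) (lcomb p m c' B)"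
proof (rule set_eqI)
  fix y
  show "y \<in> mod_p_class p (zspan p m B) (lcomb p m c B) \<longleftrightarrow>
      y \<in> mod_p_class p (zspan p m B) (lcomb p m c' B)"
  proof (cases "y \<in> zspan p m B")
    case True
    then obtain e where e: "\<forall>j<m. e j \<in> Zp p" "y = lcomb p m e B" by (rule zspanE)
    show ?thesis
      unfolding e(2) lcomb_mod_p_class_iff[OF indep c e(1)] lcomb_mod_p_class_iff[OF indep c' e(1)]
      using same by auto
  qed (simp add: mod_p_class_def)
qed

lemma card_mod_p_classes:
  assumes indep: "lin_indep p m B"
  shows "card (mod_p_class p (zspan p m B) ` zspan p m B) = nat p ^ m"
proof -
  define R where "R = PiE {..<m} (\<lambda>_. {0..<p})"
  define \<phi> where "\<phi> r = mod_p_class p (zspan p m B) (lcomb p m (\<lambda>j. zof_int p (r j)) B)" for r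
  have zof: "\<forall>j<m. zof_int p (r j) \<in> Zp p" for r by simp
  have "mod_p_class p (zspan p m B) ` zspan p m B \<subseteq> \<phi> ` R"
  proof
    fix X assume "X \<in> mod_p_class p (zspan p m B) ` zspan p m B"
    then obtain c where c: "\<forall>j<m. c j \<in> Zp p" and X: "X = mod_p_class p (zspan p m B) (lcomb p m c B)"
      by (auto elim: zspanE)
    define r where "r = restrict (\<lambda>j. c j 1) {..<m}"
    have residue: "c j 1 \<in> {0..<p}" if "j < m" for j
      using ZpD(1,2)[of "c j" 1] c that by simp
    then have "r \<in> R" unfolding R_def r_def by (simp add: restrict_PiE_iff)
    moreover have "\<forall>j<m. c j 1 = zof_int p (r j) 1"
      using residue by (simp add: r_def zof_int_def)
    ultimately show "X \<in> \<phi> ` R"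
      unfolding X \<phi>_def using mod_p_class_eq[OF indep c zof] by blast
  qed
  moreover have "\<phi> ` R \<subseteq> mod_p_class p (zspan p m B) ` zspan p m B"
    unfolding \<phi>_def by (auto intro!: imageI lcomb_in_zspan)
  moreover have "inj_on \<phi> R"
  proof (rule inj_onI)
    fix r r' assume r: "r \<in> R" and r': "r' \<in> R" and "\<phi> r = \<phi> r'"
    have "lcomb p m (\<lambda>j. zof_int p (r j)) B \<in> \<phi> r"
      unfolding \<phi>_def by (subst lcomb_mod_p_class_iff[OF indep zof zof]) simp
    then have "lcomb p m (\<lambda>j. zof_int p (r j)) B \<in> \<phi> r'" using \<open>\<phi> r = \<phi> r'\<close> by simp
    then have "\<forall>j<m. zof_int p (r j) 1 = zof_int p (r' j) 1"
      unfolding \<phi>_def lcomb_mod_p_class_iff[OF indep zof[of r'] zof[of r]] .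
    then have "r j = r' j" if "j \<in> {..<m}" for j
      using PiE_mem[OF r[unfolded R_def] that] PiE_mem[OF r'[unfolded R_def] that] that
      by (simp add: zof_int_def) (metis mod_pos_pos_trivial)
    then show "r = r'" using PiE_ext r r' unfolding R_def by metis
  qed
  ultimately have "card (mod_p_class p (zspan p m B) ` zspan p m B) = card R"
    using card_image by fastforce
  also have "card R = nat p ^ m" unfolding R_def by (simp add: card_PiE)
  finally show ?thesis .
qed

text \<open>The rank of a free submodule M is determined by |M/pM| = p^rank.\<close>

lemma lattice_dim_is_basis:
  assumes M: "submodule p d M" and bs: "is_basis p M bs"
  shows "lattice_dim p M = length bs"
  unfolding lattice_dim_def
proof (rule Least_equality)
  fix n assume "\<exists>bs'. length bs' = n \<and> is_basis p M bs'"
  then obtain bs' where bs': "length bs' = n" "is_basis p M bs'" by blast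
  have "nat p ^ length bs = nat p ^ length bs'"
    using card_mod_p_classes[OF is_basis_lin_indep[OF M bs]]
      card_mod_p_classes[OF is_basis_lin_indep[OF M bs'(2)]]
    unfolding is_basis_zspan_eq[OF M bs, symmetric] is_basis_zspan_eq[OF M bs'(2), symmetric] by simp
  moreover have "nat p > 1" using p_gt_1 by simp
  ultimately show "length bs \<le> n" using bs'(1) by (simp add: power_inject_exp)
qed (use bs in blast)

end


section \<open>The isolator of a sublattice\<close>

lemma finite_image_factor:
  assumes "finite (g ` A)" and "\<And>x y. x \<in> A \<Longrightarrow> y \<in> A \<Longrightarrow> g x = g y \<Longrightarrow> f x = f y"
  shows "finite (f ` A)"
proof -
  have "f ` A \<subseteq> (\<lambda>r. f (SOME x. x \<in> A \<and> g x = r)) ` g ` A"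
  proof
    fix y assume "y \<in> f ` A"
    then obtain a where a: "a \<in> A" "y = f a" by blast
    define x where "x = (SOME x. x \<in> A \<and> g x = g a)"
    have "x \<in> A \<and> g x = g a" unfolding x_def by (rule someI[of _ a]) (use a in simp)
    then have "y = f x" using assms(2)[of x a] a by simp
    then show "y \<in> (\<lambda>r. f (SOME x. x \<in> A \<and> g x = r)) ` g ` A"
      unfolding x_def using a(1) by (intro image_eqI[of _ _ "g a"]) simp_all
  qed
  then show ?thesis using assms(1) finite_subset by blast
qed

context prime_Zp
begin

lemma zdiv_ppow_vec:
  assumes w: "w \<in> Zpvec p d" and divisible: "\<forall>i<d. w i N = 0"
  shows "\<exists>z\<in>Zpvec p d. vsmul p (ppow p N) z = w"
proof
  define z where "z i = (if i < d then zdiv_ppow p N (w i) else (\<lambda>n. 0))" for i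
  show "z \<in> Zpvec p d"
    unfolding Zpvec_def z_def
    using zdiv_ppow_Zp[OF Zpvec_in_Zp[OF w] divisible[rule_format]] by simp
  show "vsmul p (ppow p N) z = w"
  proof (rule vec_eqI)
    fix i n
    show "[vsmul p (ppow p N) z i n = w i n] (mod p ^ n)"
    proof (cases "i < d")
      case True
      then show ?thesis
        using zdiv_ppow_cong[OF Zpvec_in_Zp[OF w True] divisible[rule_format, OF True], of n]
        by (simp add: z_def vsmul_def zmul_def ppow_def zof_int_def cong_def mod_arith_simps)
    qed (simp add: z_def vsmul_def zmul_def Zpvec_outside[OF w])
  qed (simp_all add: Zpvec_reduced[OF w])
qed

lemma coset_shift:
  assumes L: "submodule p d L" and w: "w \<in> L"
  shows "vadd p (vadd p x w) ` L = vadd p x ` L"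
proof
  have reduced: "reduced p l" if "l \<in> L" for l
    using L that Zpvec_reduced unfolding submodule_def by blast
  have vneg_L: "vneg p w \<in> L" using L w unfolding submodule_def vneg_def by simp
  show "vadd p (vadd p x w) ` L \<subseteq> vadd p x ` L"
  proof
    fix y assume "y \<in> vadd p (vadd p x w) ` L"
    then obtain l where "l \<in> L" "y = vadd p x (vadd p w l)" by (auto simp: vadd_assoc)
    moreover have "vadd p w l \<in> L" using L w \<open>l \<in> L\<close> unfolding submodule_def by blast
    ultimately show "y \<in> vadd p x ` L" by blast
  qed
  show "vadd p x ` L \<subseteq> vadd p (vadd p x w) ` L"
  proof
    fix y assume "y \<in> vadd p x ` L"
    then obtain l where l: "l \<in> L" "y = vadd p x l" by blast
    then have "y = vadd p (vadd p x w) (vadd p (vneg p w) l)"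
      by (simp add: vadd_assoc vadd_vneg_left[OF reduced])
    moreover have "vadd p (vneg p w) l \<in> L" using L vneg_L l(1) unfolding submodule_def by blast
    ultimately show "y \<in> vadd p (vadd p x w) ` L" by blast
  qed
qed

lemma isolator_subset: "isolator p S L \<subseteq> S"
  unfolding isolator_def by blast

lemma isolator_isolated:
  "\<forall>y\<in>S. vsmul p (zof_int p p) y \<in> isolator p S L \<longrightarrow> y \<in> isolator p S L"
proof (intro ballI impI)
  fix y assume "y \<in> S" "vsmul p (zof_int p p) y \<in> isolator p S L"
  then obtain k where "vsmul p (ppow p k) (vsmul p (ppow p 1) y) \<in> L"
    unfolding isolator_ppow by (auto simp: ppow_def)
  then have "vsmul p (ppow p (k + 1)) y \<in> L" by (simp add: vsmul_ppow_ppow)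
  then show "y \<in> isolator p S L" using \<open>y \<in> S\<close> unfolding isolator_ppow by blast
qed

text \<open>The coset of x is determined by the residues of its coordinates modulo p^N.\<close>

lemma finite_cosets_isolator:
  assumes L: "submodule p d L" and I: "submodule p d (isolator p (Zpvec p d) L)"
    and bound: "\<forall>x\<in>isolator p (Zpvec p d) L. vsmul p (ppow p N) x \<in> L"
  shows "finite (cosets p (isolator p (Zpvec p d) L) L)"
proof -
  let ?I = "isolator p (Zpvec p d) L"
  define g where "g x = restrict (\<lambda>i. x i N) {..<d}" for x :: zvec
  have "g x \<in> PiE {..<d} (\<lambda>_. {0..<p ^ N})" if "x \<in> ?I" for x
  proof -
    have "x \<in> Zpvec p d" using that unfolding isolator_def by blast
    then show ?thesis
      unfolding g_def restrict_PiE_iff using ZpD(1,2)[OF Zpvec_in_Zp] by simp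
  qed
  then have "finite (g ` ?I)"
    by (intro finite_subset[OF _ finite_PiE[of "{..<d}" "\<lambda>_. {0..<p ^ N}"]]) auto
  moreover have "vadd p x ` L = vadd p x' ` L" if x: "x \<in> ?I" "x' \<in> ?I" "g x = g x'" for x x'
  proof -
    define w where "w = vadd p x' (vneg p x)"
    have "w \<in> ?I" using I x unfolding w_def vneg_def submodule_def by simp
    then obtain k where wZ: "w \<in> Zpvec p d" and wk: "vsmul p (ppow p k) w \<in> L"
      unfolding isolator_ppow by blast
    have "x i N = x' i N" if "i < d" for i using fun_cong[OF x(3), of i] that by (simp add: g_def)
    then have "\<forall>i<d. w i N = 0"
      by (simp add: w_def vadd_def zadd_def vneg_def vsmul_def zmul_def zneg_def zof_int_def
          mod_arith_simps)
    then obtain z where z: "z \<in> Zpvec p d" "vsmul p (ppow p N) z = w"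
      using zdiv_ppow_vec[OF wZ] by blast
    then have "vsmul p (ppow p (k + N)) z \<in> L" using wk by (simp add: vsmul_ppow_ppow[symmetric])
    then have "z \<in> ?I" using z(1) unfolding isolator_ppow by blast
    then have "w \<in> L" using bound z(2) by blast
    moreover have "x' = vadd p x w"
      unfolding w_def using Zpvec_reduced x(2) unfolding isolator_def by (blast intro: vadd_diff)
    ultimately show ?thesis using coset_shift[OF L] by simp
  qed
  ultimately have "finite ((\<lambda>x. vadd p x ` L) ` ?I)" by (rule finite_image_factor)
  moreover have "cosets p ?I L = (\<lambda>x. vadd p x ` L) ` ?I" unfolding cosets_def by blast
  ultimately show ?thesis by simp
qed

lemma isolator_bracket_closed:
  assumes lat: "lie_lattice p d br" and L: "\<forall>x\<in>L. \<forall>y\<in>L. br x y \<in> L"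
    and x: "x \<in> isolator p (Zpvec p d) L" and y: "y \<in> isolator p (Zpvec p d) L"
  shows "br x y \<in> isolator p (Zpvec p d) L"
proof -
  obtain a where a: "x \<in> Zpvec p d" "vsmul p (ppow p a) x \<in> L" using x unfolding isolator_ppow by blast
  obtain b where b: "y \<in> Zpvec p d" "vsmul p (ppow p b) y \<in> L" using y unfolding isolator_ppow by blast
  have bilinear: "\<And>c u v. c \<in> Zp p \<Longrightarrow> u \<in> Zpvec p d \<Longrightarrow> v \<in> Zpvec p d \<Longrightarrow>
      br (vsmul p c u) v = vsmul p c (br u v) \<and> br u (vsmul p c v) = vsmul p c (br u v)"
    using lat unfolding lie_lattice_def by blast
  have "br (vsmul p (ppow p a) x) (vsmul p (ppow p b) y) = vsmul p (ppow p (a + b)) (br x y)"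
    using bilinear a(1) b(1) vsmul_Zpvec by (simp add: vsmul_ppow_ppow add.commute)
  then have "vsmul p (ppow p (a + b)) (br x y) \<in> L" using L a(2) b(2) by metis
  moreover have "br x y \<in> Zpvec p d" using lat a(1) b(1) unfolding lie_lattice_def by blast
  ultimately show ?thesis unfolding isolator_ppow by blast
qed

lemma isolator_ideal_closed:
  assumes lat: "lie_lattice p d br" and L: "\<forall>x\<in>L. \<forall>s\<in>Zpvec p d. br x s \<in> L"
    and x: "x \<in> isolator p (Zpvec p d) L" and s: "s \<in> Zpvec p d"
  shows "br x s \<in> isolator p (Zpvec p d) L"
proof -
  obtain k where k: "x \<in> Zpvec p d" "vsmul p (ppow p k) x \<in> L" using x unfolding isolator_ppow by blast
  have "br (vsmul p (ppow p k) x) s = vsmul p (ppow p k) (br x s)"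
    using lat k(1) s unfolding lie_lattice_def by simp
  then have "vsmul p (ppow p k) (br x s) \<in> L" using L k(2) s by metis
  moreover have "br x s \<in> Zpvec p d" using lat k(1) s unfolding lie_lattice_def by blast
  ultimately show ?thesis unfolding isolator_ppow by blast
qed

lemma isolator_free:
  assumes L: "submodule p d L" and bs: "is_basis p L bs"
  obtains bs' N where "submodule p d (isolator p (Zpvec p d) L)"
    "is_basis p (isolator p (Zpvec p d) L) bs'" "length bs' = length bs"
    "\<forall>x\<in>isolator p (Zpvec p d) L. vsmul p (ppow p N) x \<in> L"
proof -
  let ?m = "length bs"
  have L_span: "L = zspan p ?m (nth bs)" by (rule is_basis_zspan_eq[OF L bs])
  have "\<forall>j<?m. bs ! j \<in> Zpvec p d"
    using L bs nth_mem unfolding submodule_def is_basis_def by blast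
  then obtain E N where "isolating_basis p d ?m (nth bs) E N"
    using isolating_basis_exists is_basis_lin_indep[OF L bs] by blast
  then have E: "Zpvec_basis p d E" "?m \<le> d"
    and sub: "isolator p (Zpvec p d) L \<subseteq> zspan p ?m E"
    and bound: "\<forall>x\<in>zspan p ?m E. vsmul p (ppow p N) x \<in> L"
    unfolding isolating_basis_def L_span[symmetric] by blast+
  have E_Zpvec: "\<And>j. j < ?m \<Longrightarrow> E j \<in> Zpvec p d" using Zpvec_basis_Zpvec[OF E(1)] E(2) by simp
  have eq: "isolator p (Zpvec p d) L = zspan p ?m E"
  proof
    show "zspan p ?m E \<subseteq> isolator p (Zpvec p d) L"
    proof
      fix x assume "x \<in> zspan p ?m E"
      then have "x \<in> Zpvec p d" "vsmul p (ppow p N) x \<in> L"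
        using zspan_Zpvec[of ?m E d] E_Zpvec bound by blast+
      then show "x \<in> isolator p (Zpvec p d) L" unfolding isolator_ppow by blast
    qed
  qed (rule sub)
  show ?thesis
  proof (rule that)
    show "submodule p d (isolator p (Zpvec p d) L)" unfolding eq using E_Zpvec by (rule zspan_submodule)
    show "is_basis p (isolator p (Zpvec p d) L) (map E [0..<?m])" unfolding eq by (rule is_basis_zspan[OF E])
  qed (use bound eq in simp_all)
qed

end


section \<open>Potent filtrations of isolated ideals\<close>

context prime_Zp
begin

lemma iter_br_closed:
  assumes "\<forall>x\<in>I. \<forall>s\<in>S. br x s \<in> I"
  shows "x \<in> I \<Longrightarrow> set ss \<subseteq> S \<Longrightarrow> iter_br br x ss \<in> I"
  using assms by (induction ss arbitrary: x) (auto simp: iter_br_def)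

lemma lie_ideal_restrict:
  assumes M: "lie_ideal p d br (Zpvec p d) M" and I: "submodule p d I"
    and IS: "I \<subseteq> S" and SZ: "S \<subseteq> Zpvec p d" and closed: "\<forall>x\<in>I. \<forall>s\<in>S. br x s \<in> I"
  shows "lie_ideal p d br S (I \<inter> M)"
  unfolding lie_ideal_def
proof (intro conjI ballI)
  show "submodule p d (I \<inter> M)" using I M unfolding lie_ideal_def submodule_def by auto
  show "I \<inter> M \<subseteq> S" using IS by blast
  fix x s assume "x \<in> I \<inter> M" "s \<in> S"
  then show "br x s \<in> I \<inter> M" using M closed SZ unfolding lie_ideal_def by blast
qed

lemma potent_filtration_restrict:
  assumes PF: "potent_filtration p d br (Zpvec p d) (Zpvec p d) Ms"
    and I: "submodule p d I" and IS: "I \<subseteq> S" and SZ: "S \<subseteq> Zpvec p d"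
    and closed: "\<forall>x\<in>I. \<forall>s\<in>S. br x s \<in> I"
    and isolated: "\<forall>y\<in>Zpvec p d. vsmul p (zof_int p p) y \<in> I \<longrightarrow> y \<in> I"
  shows "potent_filtration p d br S I (\<lambda>i. I \<inter> Ms i)"
proof -
  have M1: "Ms 1 = Zpvec p d"
    and ideal: "\<And>i. i \<ge> 1 \<Longrightarrow> lie_ideal p d br (Zpvec p d) (Ms i)"
    and decr: "\<And>i. i \<ge> 1 \<Longrightarrow> Ms (Suc i) \<subseteq> Ms i"
    and Inter: "(\<Inter>i\<in>{1..}. Ms i) = {vzero}"
    and br: "\<And>i x s. i \<ge> 1 \<Longrightarrow> x \<in> Ms i \<Longrightarrow> s \<in> Zpvec p d \<Longrightarrow> br x s \<in> Ms (Suc i)"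
    and potent: "\<And>i x ss. i \<ge> 1 \<Longrightarrow> x \<in> Ms i \<Longrightarrow> length ss = nat (p - 1) \<Longrightarrow>
        set ss \<subseteq> Zpvec p d \<Longrightarrow> iter_br br x ss \<in> vsmul p (zof_int p p) ` Ms (Suc i)"
    using PF unfolding potent_filtration_def by blast+
  show ?thesis
    unfolding potent_filtration_def
  proof (intro conjI allI impI ballI)
    show "I \<inter> Ms 1 = I" using M1 I unfolding submodule_def by auto
    have "vzero \<in> I" using I unfolding submodule_def by blast
    then show "(\<Inter>i\<in>{1..}. I \<inter> Ms i) = {vzero}" using Inter by auto
  next
    fix i :: nat assume "1 \<le> i"
    show "lie_ideal p d br S (I \<inter> Ms i)" by (rule lie_ideal_restrict[OF ideal[OF \<open>1 \<le> i\<close>] I IS SZ closed])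
    show "I \<inter> Ms (Suc i) \<subseteq> I \<inter> Ms i" using decr[OF \<open>1 \<le> i\<close>] by blast
  next
    fix i :: nat and x s assume "1 \<le> i" "x \<in> I \<inter> Ms i" "s \<in> S"
    then show "br x s \<in> I \<inter> Ms (Suc i)" using br closed SZ by blast
  next
    fix i :: nat and x ss assume i: "1 \<le> i" and x: "x \<in> I \<inter> Ms i"
      and ss: "length ss = nat (p - 1)" "set ss \<subseteq> S"
    obtain y where y: "y \<in> Ms (Suc i)" "iter_br br x ss = vsmul p (zof_int p p) y"
      using potent[OF i _ ss(1)] x ss(2) SZ by blast
    have "y \<in> Zpvec p d" using ideal[of "Suc i"] y(1) unfolding lie_ideal_def by auto
    moreover have "iter_br br x ss \<in> I" using iter_br_closed[OF closed] x ss(2) by blast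
    ultimately have "y \<in> I" using isolated y(2) by simp
    then show "iter_br br x ss \<in> vsmul p (zof_int p p) ` (I \<inter> Ms (Suc i))" using y by blast
  qed
qed

lemma saturable_isolator:
  assumes lat: "lie_lattice p d br" and sat: "saturable p d br (Zpvec p d)"
    and L: "lie_sublattice p d br L"
  shows "saturable p d br (isolator p (Zpvec p d) L)"
proof -
  let ?I = "isolator p (Zpvec p d) L"
  obtain bs where L_sub: "submodule p d L" and L_br: "\<forall>x\<in>L. \<forall>y\<in>L. br x y \<in> L"
    and bs: "is_basis p L bs"
    using L unfolding lie_sublattice_def by blast
  obtain bs' where I_sub: "submodule p d ?I" and I_basis: "is_basis p ?I bs'"
    using isolator_free[OF L_sub bs] by metis
  have I_br: "\<forall>x\<in>?I. \<forall>y\<in>?I. br x y \<in> ?I"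
    using isolator_bracket_closed[OF lat L_br] by blast
  obtain Ms where "potent_filtration p d br (Zpvec p d) (Zpvec p d) Ms"
    using sat unfolding saturable_def PF_embedded_def by blast
  from potent_filtration_restrict[OF this I_sub subset_refl isolator_subset I_br isolator_isolated]
  have "potent_filtration p d br ?I ?I (\<lambda>i. ?I \<inter> Ms i)" .
  then show ?thesis
    unfolding saturable_def lie_sublattice_def PF_embedded_def using I_sub I_br I_basis by blast
qed

lemma PF_embedded_isolator:
  assumes lat: "lie_lattice p d br" and sat: "saturable p d br (Zpvec p d)"
    and L: "lie_sublattice p d br L" and ideal: "lie_ideal p d br (Zpvec p d) L"
  shows "PF_embedded p d br (Zpvec p d) (isolator p (Zpvec p d) L)"
proof -
  let ?I = "isolator p (Zpvec p d) L"
  obtain bs where L_sub: "submodule p d L" and bs: "is_basis p L bs"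
    using L unfolding lie_sublattice_def by blast
  obtain bs' where I_sub: "submodule p d ?I"
    using isolator_free[OF L_sub bs] by metis
  have I_ideal: "\<forall>x\<in>?I. \<forall>s\<in>Zpvec p d. br x s \<in> ?I"
    using isolator_ideal_closed[OF lat] ideal unfolding lie_ideal_def by blast
  obtain Ms where "potent_filtration p d br (Zpvec p d) (Zpvec p d) Ms"
    using sat unfolding saturable_def PF_embedded_def by blast
  from potent_filtration_restrict[OF this I_sub isolator_subset subset_refl I_ideal isolator_isolated]
  have "potent_filtration p d br (Zpvec p d) ?I (\<lambda>i. ?I \<inter> Ms i)" .
  then show ?thesis unfolding PF_embedded_def by blast
qed

end

theorem mainTheorem10:
  fixes p :: int and d :: nat and br :: "zvec \<Rightarrow> zvec \<Rightarrow> zvec" and L :: "zvec set"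
  assumes "prime p" and "odd p"
    and "lie_lattice p d br"
    and "saturable p d br (Zpvec p d)"
    and "lie_sublattice p d br L"
  shows "saturable p d br (isolator p (Zpvec p d) L)
    \<and> finite (cosets p (isolator p (Zpvec p d) L) L)
    \<and> lattice_dim p L = lattice_dim p (isolator p (Zpvec p d) L)
    \<and> (lie_ideal p d br (Zpvec p d) L \<longrightarrow> PF_embedded p d br (Zpvec p d) (isolator p (Zpvec p d) L))"
proof -
  interpret prime_Zp p by unfold_locales (rule assms(1))
  obtain bs where L: "submodule p d L" "is_basis p L bs"
    using assms(5) unfolding lie_sublattice_def by blast
  obtain bs' N where I: "submodule p d (isolator p (Zpvec p d) L)"
    "is_basis p (isolator p (Zpvec p d) L) bs'" "length bs' = length bs"
    "\<forall>x\<in>isolator p (Zpvec p d) L. vsmul p (ppow p N) x \<in> L"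
    using isolator_free[OF L] by metis
  have "finite (cosets p (isolator p (Zpvec p d) L) L)"
    using finite_cosets_isolator[OF L(1) I(1,4)] .
  moreover have "lattice_dim p L = lattice_dim p (isolator p (Zpvec p d) L)"
    using lattice_dim_is_basis[OF L] lattice_dim_is_basis[OF I(1,2)] I(3) by simp
  ultimately show ?thesis
    using saturable_isolator[OF assms(3-5)] PF_embedded_isolator[OF assms(3-5)] by blast
qed

end
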